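(* Let $(R,[\cdot_\lambda\cdot],\alpha,\beta)$ be a regular BiHom-Lie conformal superalgebra, $(M,\phi,\psi)$ a BiHom-conformal module of $R$ with representation $\rho$ and with $\phi,\psi$ invertible, and let $T:M\to R$ be an $\mathcal{O}$-operator associated with $\rho$. Then the $\lambda$-product $$[u_\lambda v]_T=\rho(Tu)_\lambda v-(-1)^{|u||v|}\rho(T\phi^{-1}\psi(v))_{-\lambda-\partial}\,\phi\psi^{-1}(u),\qquad u,v\in M,$$ defines a BiHom-Lie conformal superalgebra structure $(M,[\cdot_\lambda\cdot]_T,\phi,\psi)$ on $M$.
   Context: All spaces are over $\mathbb{C}$. For a $\mathbb{C}[\partial]$-module $V$, $V[\lambda]=\mathbb{C}[\lambda]\otimes V$. $|a|$ denotes the parity of a homogeneous element. Substitution $\lambda\mapsto-\lambda-\partial$ means: expand in powers of $\lambda$ and replace $\lambda$ by $-\lambda-\partial$, $\partial$ acting on the coefficients. A BiHom-Lie conformal superalgebra $(R,[\cdot_\lambda\cdot],\alpha,\beta)$ is a $\mathbb{Z}_2$-graded $\mathbb{C}[\partial]$-module $R$ with two commuting linear maps $\alpha,\beta$ and a $\mathbb{C}$-linear map $R\otimes R\to R[\lambda]$, $a\otimes b\mapsto[a_\lambda b]$, with $[R_{i\,\lambda}R_j]\subseteq R_{i+j}[\lambda]$, such that for all homogeneous $a,b,c$: (1) $\alpha\partial=\partial\alpha$, $\beta\partial=\partial\beta$; (2) $\alpha([a_\lambda b])=[\alpha(a)_\lambda\alpha(b)]$, $\beta([a_\lambda b])=[\beta(a)_\lambda\beta(b)]$;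 (3) $[(\partial a)_\lambda b]=-\lambda[a_\lambda b]$, $[a_\lambda(\partial b)]=(\partial+\lambda)[a_\lambda b]$; (4) $[\beta(a)_\lambda\alpha(b)]=-(-1)^{|a||b|}[\beta(b)_{-\lambda-\partial}\alpha(a)]$; (5) $[\alpha\beta(a)_\lambda[b_\mu c]]=[[\beta(a)_\lambda b]_{\lambda+\mu}\beta(c)]+(-1)^{|a||b|}[\beta(b)_\mu[\alpha(a)_\lambda c]]$. It is regular if $\alpha,\beta$ are bijective. A BiHom-conformal module $(M,\phi,\psi)$ of $R$ is a $\mathbb{Z}_2$-graded $\mathbb{C}[\partial]$-module $M$ with linear maps $\phi,\psi$ and a $\mathbb{C}$-linear map $\rho$ assigning to $a\in R$ a $\mathbb{C}$-linear map $\rho(a)_\lambda:M\to M[\lambda]$ (of parity $|a|$), such that for all homogeneous $a,b\in R$: $\rho(\partial a)_\lambda=-\lambda\rho(a)_\lambda$, $\rho(a)_\lambda\partial=(\lambda+\partial)\rho(a)_\lambda$; $\phi\psi=\psi\phi$, $\psi\partial=\partial\psi$, $\phi\partial=\partial\phi$; $\phi\rho(a)_\lambda=\rho(\alpha(a))_\lambda\phi$, $\psi\rho(a)_\lambda=\rho(\beta(a))_\lambda\psi$; and $\rho([\beta(a)_\lambda b])_{\lambda+\mu}\psi=\rho(\alpha\beta(a))_\lambda\rho(b)_\mu-(-1)^{|a||b|}\rho(\beta(b))_\mu\rho(\alpha(a))_\lambda$ (where $\rho(\sum_n\lambda^nc_n)_{\lambda+\mu}=\sum_n\lambda^n\rho(c_n)_{\lambda+\mu}$).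 An $\mathcal{O}$-operator associated with $\rho$ is a $\mathbb{C}[\partial]$-module homomorphism $T:M\to R$ with $T\circ\phi=\alpha\circ T$, $T\circ\psi=\beta\circ T$, and $[Tu_\lambda Tv]=T\big(\rho(Tu)_\lambda v-(-1)^{|u||v|}\rho(T\phi^{-1}\psi(v))_{-\lambda-\partial}\phi\psi^{-1}(u)\big)$ for all homogeneous $u,v\in M$. *)

theory Defs
  imports Complex_Main
begin

text \<open>The Z2-grading is a map
G :: bool => set, G False = even part, G True = odd part (parity addition = xor).
A polynomial in lambda with coefficients in V (an element of V[lambda]) is a
finitely supported coefficient function nat => V (coefficient of lambda^n).
A polynomial in two variables (lambda, mu) is nat => nat => V (coefficient of
lambda^l mu^m). A lambda-bracket is br a b :: nat => V.\<close>

definition lin :: "(complex \<Rightarrow> 'a::ab_group_add \<Rightarrow> 'a) \<Rightarrow> (complex \<Rightarrow> 'b::ab_group_add \<Rightarrow> 'b) \<Rightarrow> ('a \<Rightarrow> 'b) \<Rightarrow> bool" where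
  "lin s1 s2 f \<longleftrightarrow> (\<forall>x y. f (x + y) = f x + f y) \<and> (\<forall>c x. f (s1 c x) = s2 c (f x))"

definition csubspace :: "(complex \<Rightarrow> 'a::ab_group_add \<Rightarrow> 'a) \<Rightarrow> 'a set \<Rightarrow> bool" where
  "csubspace s S \<longleftrightarrow> 0 \<in> S \<and> (\<forall>x\<in>S. \<forall>y\<in>S. x + y \<in> S) \<and> (\<forall>c. \<forall>x\<in>S. s c x \<in> S)"

definition graded_space :: "(complex \<Rightarrow> 'a::ab_group_add \<Rightarrow> 'a) \<Rightarrow> (bool \<Rightarrow> 'a set) \<Rightarrow> bool" where
  "graded_space s G \<longleftrightarrow> module s \<and> csubspace s (G False) \<and> csubspace s (G True)
     \<and> G False \<inter> G True = {0} \<and> (\<forall>x. \<exists>y\<in>G False. \<exists>z\<in>G True. x = y + z)"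

definition even_map :: "(bool \<Rightarrow> 'a set) \<Rightarrow> (bool \<Rightarrow> 'b set) \<Rightarrow> ('a \<Rightarrow> 'b) \<Rightarrow> bool" where
  "even_map G G' f \<longleftrightarrow> (\<forall>i. \<forall>x\<in>G i. f x \<in> G' i)"

definition gproj :: "(bool \<Rightarrow> 'a::ab_group_add set) \<Rightarrow> bool \<Rightarrow> 'a \<Rightarrow> 'a" where
  "gproj G i x = (THE y. y \<in> G i \<and> x - y \<in> G (\<not> i))"

definition fin_supp :: "(nat \<Rightarrow> 'a::zero) \<Rightarrow> bool" where
  "fin_supp c \<longleftrightarrow> finite {n. c n \<noteq> 0}"

definition sgnx :: "bool \<Rightarrow> bool \<Rightarrow> 'a::group_add \<Rightarrow> 'a" where
  "sgnx i j x = (if i \<and> j then - x else x)"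

definition lam_mul :: "(nat \<Rightarrow> 'a::zero) \<Rightarrow> nat \<Rightarrow> 'a" where
  "lam_mul c n = (if n = 0 then 0 else c (n - 1))"

text \<open>Substitution lambda |-> -lambda-D in sum_n lambda^n c_n, D acting on coefficients:
  sum_n (-lambda-D)^n c_n has lambda^k-coefficient sum_n binom(n,k) (-1)^n D^(n-k) c_n.\<close>
definition subst_neg :: "(complex \<Rightarrow> 'a::ab_group_add \<Rightarrow> 'a) \<Rightarrow> ('a \<Rightarrow> 'a) \<Rightarrow> (nat \<Rightarrow> 'a) \<Rightarrow> nat \<Rightarrow> 'a" where
  "subst_neg s D c k = (\<Sum>n\<in>{n. k \<le> n \<and> c n \<noteq> 0}. s (of_nat (n choose k) * (- 1) ^ n) ((D ^^ (n - k)) (c n)))"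

text \<open>Given c p q, the expression sum_{p,q} lambda^p (lambda+mu)^q c p q as a polynomial
  in (lambda, mu): coefficient of lambda^l mu^m.\<close>
definition subst_sum :: "(complex \<Rightarrow> 'a::ab_group_add \<Rightarrow> 'a) \<Rightarrow> (nat \<Rightarrow> nat \<Rightarrow> 'a) \<Rightarrow> nat \<Rightarrow> nat \<Rightarrow> 'a" where
  "subst_sum s c l m = (\<Sum>p\<le>l. s (of_nat ((l - p + m) choose m)) (c p (l - p + m)))"

definition bihom_lcsa :: "(complex \<Rightarrow> 'r::ab_group_add \<Rightarrow> 'r) \<Rightarrow> (bool \<Rightarrow> 'r set) \<Rightarrow> ('r \<Rightarrow> 'r)
    \<Rightarrow> ('r \<Rightarrow> 'r \<Rightarrow> nat \<Rightarrow> 'r) \<Rightarrow> ('r \<Rightarrow> 'r) \<Rightarrow> ('r \<Rightarrow> 'r) \<Rightarrow> bool" where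
  "bihom_lcsa s G D br \<alpha> \<beta> \<longleftrightarrow>
     graded_space s G \<and> lin s s D \<and> even_map G G D \<and>
     lin s s \<alpha> \<and> lin s s \<beta> \<and> even_map G G \<alpha> \<and> even_map G G \<beta> \<and> \<alpha> \<circ> \<beta> = \<beta> \<circ> \<alpha> \<and>
     (\<forall>b n. lin s s (\<lambda>a. br a b n)) \<and> (\<forall>a n. lin s s (\<lambda>b. br a b n)) \<and>
     (\<forall>a b. fin_supp (br a b)) \<and>
     (\<forall>i j. \<forall>a\<in>G i. \<forall>b\<in>G j. \<forall>n. br a b n \<in> G (i \<noteq> j)) \<and>
     \<alpha> \<circ> D = D \<circ> \<alpha> \<and> \<beta> \<circ> D = D \<circ> \<beta> \<and>
     (\<forall>a b n. \<alpha> (br a b n) = br (\<alpha> a) (\<alpha> b) n) \<and>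
     (\<forall>a b n. \<beta> (br a b n) = br (\<beta> a) (\<beta> b) n) \<and>
     (\<forall>a b. br (D a) b = (\<lambda>n. - lam_mul (br a b) n)) \<and>
     (\<forall>a b. br a (D b) = (\<lambda>n. D (br a b n) + lam_mul (br a b) n)) \<and>
     (\<forall>i j. \<forall>a\<in>G i. \<forall>b\<in>G j.
        br (\<beta> a) (\<alpha> b) = (\<lambda>n. - sgnx i j (subst_neg s D (br (\<beta> b) (\<alpha> a)) n))) \<and>
     (\<forall>i j k. \<forall>a\<in>G i. \<forall>b\<in>G j. \<forall>c\<in>G k. \<forall>l m.
        br (\<alpha> (\<beta> a)) (br b c m) l
          = subst_sum s (\<lambda>p q. br (br (\<beta> a) b p) (\<beta> c) q) l m
            + sgnx i j (br (\<beta> b) (br (\<alpha> a) c l) m))"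

definition bihom_conf_module :: "(complex \<Rightarrow> 'r::ab_group_add \<Rightarrow> 'r) \<Rightarrow> (bool \<Rightarrow> 'r set) \<Rightarrow> ('r \<Rightarrow> 'r)
    \<Rightarrow> ('r \<Rightarrow> 'r \<Rightarrow> nat \<Rightarrow> 'r) \<Rightarrow> ('r \<Rightarrow> 'r) \<Rightarrow> ('r \<Rightarrow> 'r)
    \<Rightarrow> (complex \<Rightarrow> 'm::ab_group_add \<Rightarrow> 'm) \<Rightarrow> (bool \<Rightarrow> 'm set) \<Rightarrow> ('m \<Rightarrow> 'm)
    \<Rightarrow> ('r \<Rightarrow> 'm \<Rightarrow> nat \<Rightarrow> 'm) \<Rightarrow> ('m \<Rightarrow> 'm) \<Rightarrow> ('m \<Rightarrow> 'm) \<Rightarrow> bool" where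
  "bihom_conf_module sR GR DR brR \<alpha> \<beta> sM GM DM \<rho> \<phi> \<psi> \<longleftrightarrow>
     graded_space sM GM \<and> lin sM sM DM \<and> even_map GM GM DM \<and>
     lin sM sM \<phi> \<and> lin sM sM \<psi> \<and> even_map GM GM \<phi> \<and> even_map GM GM \<psi> \<and>
     (\<forall>v n. lin sR sM (\<lambda>a. \<rho> a v n)) \<and> (\<forall>a n. lin sM sM (\<lambda>v. \<rho> a v n)) \<and>
     (\<forall>a v. fin_supp (\<rho> a v)) \<and>
     (\<forall>i j. \<forall>a\<in>GR i. \<forall>v\<in>GM j. \<forall>n. \<rho> a v n \<in> GM (i \<noteq> j)) \<and>
     (\<forall>a v. \<rho> (DR a) v = (\<lambda>n. - lam_mul (\<rho> a v) n)) \<and>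
     (\<forall>a v. \<rho> a (DM v) = (\<lambda>n. DM (\<rho> a v n) + lam_mul (\<rho> a v) n)) \<and>
     \<phi> \<circ> \<psi> = \<psi> \<circ> \<phi> \<and> \<psi> \<circ> DM = DM \<circ> \<psi> \<and> \<phi> \<circ> DM = DM \<circ> \<phi> \<and>
     (\<forall>a v n. \<phi> (\<rho> a v n) = \<rho> (\<alpha> a) (\<phi> v) n) \<and>
     (\<forall>a v n. \<psi> (\<rho> a v n) = \<rho> (\<beta> a) (\<psi> v) n) \<and>
     (\<forall>i j. \<forall>a\<in>GR i. \<forall>b\<in>GR j. \<forall>v l m.
        subst_sum sM (\<lambda>p q. \<rho> (brR (\<beta> a) b p) (\<psi> v) q) l m
          = \<rho> (\<alpha> (\<beta> a)) (\<rho> b v m) l - sgnx i j (\<rho> (\<beta> b) (\<rho> (\<alpha> a) v l) m))"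

text \<open>The lambda-product [u_lambda v]_T on homogeneous u (parity i), v (parity j).\<close>
definition prodT_h :: "(complex \<Rightarrow> 'm::ab_group_add \<Rightarrow> 'm) \<Rightarrow> ('m \<Rightarrow> 'm) \<Rightarrow> ('r \<Rightarrow> 'm \<Rightarrow> nat \<Rightarrow> 'm)
    \<Rightarrow> ('m \<Rightarrow> 'm) \<Rightarrow> ('m \<Rightarrow> 'm) \<Rightarrow> ('m \<Rightarrow> 'r) \<Rightarrow> bool \<Rightarrow> bool \<Rightarrow> 'm \<Rightarrow> 'm \<Rightarrow> nat \<Rightarrow> 'm" where
  "prodT_h sM DM \<rho> \<phi> \<psi> T i j u v n =
     \<rho> (T u) v n - sgnx i j (subst_neg sM DM (\<rho> (T (inv \<phi> (\<psi> v))) (\<phi> (inv \<psi> u))) n)"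

definition prodT :: "(complex \<Rightarrow> 'm::ab_group_add \<Rightarrow> 'm) \<Rightarrow> (bool \<Rightarrow> 'm set) \<Rightarrow> ('m \<Rightarrow> 'm)
    \<Rightarrow> ('r \<Rightarrow> 'm \<Rightarrow> nat \<Rightarrow> 'm) \<Rightarrow> ('m \<Rightarrow> 'm) \<Rightarrow> ('m \<Rightarrow> 'm) \<Rightarrow> ('m \<Rightarrow> 'r) \<Rightarrow> 'm \<Rightarrow> 'm \<Rightarrow> nat \<Rightarrow> 'm" where
  "prodT sM GM DM \<rho> \<phi> \<psi> T u v n =
     (\<Sum>i\<in>UNIV. \<Sum>j\<in>UNIV. prodT_h sM DM \<rho> \<phi> \<psi> T i j (gproj GM i u) (gproj GM j v) n)"

definition O_operator :: "(complex \<Rightarrow> 'r::ab_group_add \<Rightarrow> 'r) \<Rightarrow> (bool \<Rightarrow> 'r set) \<Rightarrow> ('r \<Rightarrow> 'r)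
    \<Rightarrow> ('r \<Rightarrow> 'r \<Rightarrow> nat \<Rightarrow> 'r) \<Rightarrow> ('r \<Rightarrow> 'r) \<Rightarrow> ('r \<Rightarrow> 'r)
    \<Rightarrow> (complex \<Rightarrow> 'm::ab_group_add \<Rightarrow> 'm) \<Rightarrow> (bool \<Rightarrow> 'm set) \<Rightarrow> ('m \<Rightarrow> 'm)
    \<Rightarrow> ('r \<Rightarrow> 'm \<Rightarrow> nat \<Rightarrow> 'm) \<Rightarrow> ('m \<Rightarrow> 'm) \<Rightarrow> ('m \<Rightarrow> 'm) \<Rightarrow> ('m \<Rightarrow> 'r) \<Rightarrow> bool" where
  "O_operator sR GR DR brR \<alpha> \<beta> sM GM DM \<rho> \<phi> \<psi> T \<longleftrightarrow>
     lin sM sR T \<and> T \<circ> DM = DR \<circ> T \<and> even_map GM GR T \<and>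
     T \<circ> \<phi> = \<alpha> \<circ> T \<and> T \<circ> \<psi> = \<beta> \<circ> T \<and>
     (\<forall>i j. \<forall>u\<in>GM i. \<forall>v\<in>GM j.
        brR (T u) (T v) = (\<lambda>n. T (prodT_h sM DM \<rho> \<phi> \<psi> T i j u v n)))"

end

theory Submission
  imports Defs "HOL-Computational_Algebra.Polynomial"
begin

text \<open>
  A \<open>\<lambda>\<close>-polynomial \<open>\<Sum>\<^sub>n \<lambda>\<^sup>n g\<^sub>n\<close> with coefficients in a \<open>\<complex>[\<partial>]\<close>-module is determined by its values
  \<open>\<Sum>\<^sub>n P(\<partial>)\<^sup>n g\<^sub>n\<close> at polynomials \<open>P\<close> in \<open>\<partial>\<close>, in fact already at the constants (a Vandermonde
  argument). Evaluation turns the substitution \<open>\<lambda> \<mapsto> -\<lambda>-\<partial>\<close> into \<open>P \<mapsto> -P-\<partial>\<close>, the substitution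
  \<open>\<mu> \<mapsto> \<lambda>+\<mu>\<close> into \<open>Q \<mapsto> P+Q\<close>, and multiplication by \<open>\<lambda>\<close> into the operator \<open>P(\<partial>)\<close>; so identities
  between \<open>\<lambda>\<close>-brackets become identities between module elements.

  Expanding \<open>[u\<^sub>\<lambda> v]\<^sub>T\<close> twice, and rewriting \<open>T[u\<^sub>\<lambda> v]\<^sub>T = [Tu\<^sub>\<lambda> Tv]\<close> by the \<open>\<O>\<close>-operator identity
  and then by the module Jacobi identity, each of the three terms of the Jacobi identity for
  \<open>[\<cdot>\<^sub>\<lambda>\<cdot>]\<^sub>T\<close> evaluates to four values of \<open>\<rho>(Tx)\<^sub>P \<rho>(Ty)\<^sub>Q w\<close>; these twelve terms cancel in pairs.
  Skew-symmetry holds because \<open>\<lambda> \<mapsto> -\<lambda>-\<partial>\<close> is an involution.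
\<close>

section \<open>Linear maps and finitely supported sequences\<close>

lemma lin_additive: "lin s1 s2 f \<Longrightarrow> additive f"
  by (simp add: lin_def additive_def)

lemma lin_zero: "lin s1 s2 f \<Longrightarrow> f 0 = 0"
  using additive.zero lin_additive by blast

lemma lin_add: "lin s1 s2 f \<Longrightarrow> f (x + y) = f x + f y"
  by (simp add: lin_def)

lemma lin_minus: "lin s1 s2 f \<Longrightarrow> f (- x) = - f x"
  using additive.minus lin_additive by blast

lemma lin_diff: "lin s1 s2 f \<Longrightarrow> f (x - y) = f x - f y"
  using additive.diff lin_additive by blast

lemma lin_sum: "lin s1 s2 f \<Longrightarrow> f (sum g A) = (\<Sum>x\<in>A. f (g x))"
  using additive.sum lin_additive by blast

lemma lin_scale: "lin s1 s2 f \<Longrightarrow> f (s1 c x) = s2 c (f x)"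
  by (simp add: lin_def)

lemma lin_sgnx: "lin s1 s2 f \<Longrightarrow> f (sgnx i j x) = sgnx i j (f x)"
  by (simp add: sgnx_def lin_minus)

lemma lin_funpow: "lin s s f \<Longrightarrow> lin s s (f ^^ k)"
  by (induction k) (auto simp: lin_def)

lemma funpow_commute:
  "(\<And>x. f (g x) = h (f x)) \<Longrightarrow> f ((g ^^ k) x) = (h ^^ k) (f x)"
  by (induction k) auto

lemma sgnx_add: "sgnx i j (x + y) = sgnx i j x + sgnx i j (y :: 'a::ab_group_add)"
  by (simp add: sgnx_def)

lemma lam_mul_diff: "lam_mul (\<lambda>n. f n - (g n :: 'a::ab_group_add)) k = lam_mul f k - lam_mul g k"
  by (simp add: lam_mul_def)

lemma lam_mul_sgnx: "lam_mul (\<lambda>n. sgnx i j (f n :: 'a::ab_group_add)) k = sgnx i j (lam_mul f k)"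
  by (simp add: lam_mul_def sgnx_def)

definition vanishes_beyond :: "nat \<Rightarrow> (nat \<Rightarrow> 'a::zero) \<Rightarrow> bool" where
  "vanishes_beyond N g \<longleftrightarrow> (\<forall>n>N. g n = 0)"

definition vanishes_beyond2 :: "nat \<Rightarrow> (nat \<Rightarrow> nat \<Rightarrow> 'a::zero) \<Rightarrow> bool" where
  "vanishes_beyond2 N F \<longleftrightarrow> (\<forall>l m. N < l \<or> N < m \<longrightarrow> F l m = 0)"

definition fin_supp2 :: "(nat \<Rightarrow> nat \<Rightarrow> 'a::zero) \<Rightarrow> bool" where
  "fin_supp2 F \<longleftrightarrow> finite {(l, m). F l m \<noteq> 0}"

lemma fin_supp_iff_vanishes_beyond: "fin_supp g \<longleftrightarrow> (\<exists>N. vanishes_beyond N g)"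
  unfolding fin_supp_def vanishes_beyond_def finite_nat_set_iff_bounded_le
  by (metis (mono_tags, lifting) mem_Collect_eq not_le)

lemma fin_supp_common_bound:
  assumes "fin_supp g" "fin_supp h"
  obtains N where "vanishes_beyond N g" "vanishes_beyond N h"
proof -
  obtain N1 N2 where "vanishes_beyond N1 g" "vanishes_beyond N2 h"
    using assms by (auto simp: fin_supp_iff_vanishes_beyond)
  then show thesis
    by (intro that[of "max N1 N2"]) (auto simp: vanishes_beyond_def)
qed

lemma fin_supp_add:
  "fin_supp g \<Longrightarrow> fin_supp h \<Longrightarrow> fin_supp (\<lambda>n. g n + (h n :: 'a::monoid_add))"
  unfolding fin_supp_def by (rule finite_subset[of _ "{n. g n \<noteq> 0} \<union> {n. h n \<noteq> 0}"]) auto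

lemma fin_supp_diff:
  "fin_supp g \<Longrightarrow> fin_supp h \<Longrightarrow> fin_supp (\<lambda>n. g n - (h n :: 'a::group_add))"
  unfolding fin_supp_def by (rule finite_subset[of _ "{n. g n \<noteq> 0} \<union> {n. h n \<noteq> 0}"]) auto

lemma fin_supp_map: "f 0 = 0 \<Longrightarrow> fin_supp g \<Longrightarrow> fin_supp (\<lambda>n. f (g n))"
  unfolding fin_supp_def by (rule finite_subset[of _ "{n. g n \<noteq> 0}"]) auto

lemma fin_supp_sgnx: "fin_supp g \<Longrightarrow> fin_supp (\<lambda>n. sgnx i j (g n :: 'a::group_add))"
  by (rule fin_supp_map) (simp add: sgnx_def)

lemma fin_supp_lam_mul: "fin_supp g \<Longrightarrow> fin_supp (lam_mul g)"
  unfolding fin_supp_def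
  by (rule finite_subset[of _ "Suc ` {n. g n \<noteq> 0}"]) (auto simp: lam_mul_def image_iff gr0_conv_Suc)

lemma fin_supp_sum:
  "finite A \<Longrightarrow> (\<And>n. n \<in> A \<Longrightarrow> fin_supp (g n)) \<Longrightarrow> fin_supp (\<lambda>l. \<Sum>n\<in>A. (g n l :: 'a::comm_monoid_add))"
proof (induction A rule: finite_induct)
  case empty
  then show ?case by (simp add: fin_supp_def)
next
  case (insert x F)
  then show ?case by (simp add: fin_supp_add)
qed

lemma fin_supp2_vanishes_beyond2:
  assumes "fin_supp2 F"
  obtains N where "vanishes_beyond2 N F"
proof -
  let ?S = "{(l, m). F l m \<noteq> 0}"
  have "finite (fst ` ?S \<union> snd ` ?S)" using assms by (simp add: fin_supp2_def)
  then obtain N where "\<forall>n \<in> fst ` ?S \<union> snd ` ?S. n \<le> N"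
    using finite_nat_set_iff_bounded_le by blast
  then have "vanishes_beyond2 N F"
    unfolding vanishes_beyond2_def by (force simp: not_le[symmetric])
  then show thesis by (rule that)
qed

lemma vanishes_beyond2_mono: "vanishes_beyond2 N F \<Longrightarrow> N \<le> M \<Longrightarrow> vanishes_beyond2 M F"
  by (auto simp: vanishes_beyond2_def)

lemma fin_supp2_common_bound:
  assumes "fin_supp2 F" "fin_supp2 G"
  obtains N where "vanishes_beyond2 N F" "vanishes_beyond2 N G"
proof -
  obtain N1 N2 where "vanishes_beyond2 N1 F" "vanishes_beyond2 N2 G"
    using assms fin_supp2_vanishes_beyond2 by metis
  then show thesis
    by (intro that[of "max N1 N2"]) (auto elim: vanishes_beyond2_mono)
qed

lemma fin_supp2_add:
  "fin_supp2 F \<Longrightarrow> fin_supp2 G \<Longrightarrow> fin_supp2 (\<lambda>l m. F l m + (G l m :: 'a::monoid_add))"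
  unfolding fin_supp2_def
  by (rule finite_subset[of _ "{(l, m). F l m \<noteq> 0} \<union> {(l, m). G l m \<noteq> 0}"]) auto

lemma fin_supp2_diff:
  "fin_supp2 F \<Longrightarrow> fin_supp2 G \<Longrightarrow> fin_supp2 (\<lambda>l m. F l m - (G l m :: 'a::group_add))"
  unfolding fin_supp2_def
  by (rule finite_subset[of _ "{(l, m). F l m \<noteq> 0} \<union> {(l, m). G l m \<noteq> 0}"]) auto

lemma fin_supp2_sgnx: "fin_supp2 F \<Longrightarrow> fin_supp2 (\<lambda>l m. sgnx i j (F l m :: 'a::group_add))"
  unfolding fin_supp2_def by (rule finite_subset[of _ "{(l, m). F l m \<noteq> 0}"]) (auto simp: sgnx_def)

lemma fin_supp2_swap: "fin_supp2 F \<Longrightarrow> fin_supp2 (\<lambda>l m. F m l)"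
  unfolding fin_supp2_def
  by (rule finite_subset[of _ "prod.swap ` {(l, m). F l m \<noteq> 0}"]) auto

lemma fin_supp2_compose:
  assumes "fin_supp g" "\<And>v. fin_supp (f v)" "f 0 = (\<lambda>_. 0)"
  shows "fin_supp2 (\<lambda>p q. f (g p) q)"
  unfolding fin_supp2_def
proof (rule finite_subset)
  show "{(p, q). f (g p) q \<noteq> 0} \<subseteq> (\<Union>p\<in>{p. g p \<noteq> 0}. {p} \<times> {q. f (g p) q \<noteq> 0})"
    using assms(3) by (force simp: fun_eq_iff)
  show "finite (\<Union>p\<in>{p. g p \<noteq> 0}. {p} \<times> {q. f (g p) q \<noteq> 0})"
    using assms(1,2) by (auto simp: fin_supp_def)
qed

lemma vanishes_beyond2_imp_fin_supp2: "vanishes_beyond2 N F \<Longrightarrow> fin_supp2 F"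
  unfolding fin_supp2_def vanishes_beyond2_def
  by (rule finite_subset[of _ "{..N} \<times> {..N}"]) (auto simp: not_le[symmetric])

lemma fin_supp2_row: "fin_supp2 F \<Longrightarrow> fin_supp (F l)"
  unfolding fin_supp2_def fin_supp_def
  by (rule finite_subset[of _ "snd ` {(l, m). F l m \<noteq> 0}"]) force+

section \<open>Polynomials in \<open>\<partial>\<close> acting on a \<open>\<complex>[\<partial>]\<close>-module\<close>

definition poly_op :: "(complex \<Rightarrow> 'a::ab_group_add \<Rightarrow> 'a) \<Rightarrow> ('a \<Rightarrow> 'a) \<Rightarrow> complex poly \<Rightarrow> 'a \<Rightarrow> 'a" where
  "poly_op s D r v = (\<Sum>k\<le>degree r. s (coeff r k) ((D ^^ k) v))"

abbreviation poly_X :: "complex poly" where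
  "poly_X \<equiv> [:0, 1:]"

locale dmodule = vector_space s for s :: "complex \<Rightarrow> 'a::ab_group_add \<Rightarrow> 'a" +
  fixes D :: "'a \<Rightarrow> 'a"
  assumes lin_D: "lin s s D"
begin

lemma lin_scale_const: "lin s s (s c)"
  by (simp add: lin_def scale_right_distrib mult.commute)

lemma sgnx_scale: "sgnx i j (s c x) = s c (sgnx i j x)"
  by (simp add: sgnx_def scale_minus_right)

lemma poly_op_bound: "degree r \<le> N \<Longrightarrow> poly_op s D r v = (\<Sum>k\<le>N. s (coeff r k) ((D ^^ k) v))"
  unfolding poly_op_def by (rule sum.mono_neutral_left) (auto simp: coeff_eq_0)

lemma lin_poly_op: "lin s s (poly_op s D r)"
proof -
  have "lin s s (\<lambda>v. s (coeff r k) ((D ^^ k) v))" for k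
    using lin_funpow[OF lin_D, of k] lin_scale_const by (simp add: lin_def)
  then show ?thesis
    unfolding poly_op_def lin_def by (auto simp: sum.distrib scale_sum_right)
qed

lemma D_zero [simp]: "D 0 = 0"
  using lin_D lin_zero by blast

lemma poly_op_1 [simp]: "poly_op s D 1 v = v"
  by (simp add: poly_op_def)

lemma poly_op_zero_right [simp]: "poly_op s D r 0 = 0"
  using lin_poly_op lin_zero by blast

lemma poly_op_0 [simp]: "poly_op s D 0 v = 0"
  by (simp add: poly_op_def)

lemma poly_op_add: "poly_op s D (p + q) v = poly_op s D p v + poly_op s D q v"
proof -
  have "degree (p + q) \<le> max (degree p) (degree q)"
    by (rule degree_add_le) auto
  then show ?thesis
    by (simp add: poly_op_bound[of _ "max (degree p) (degree q)"] sum.distrib scale_left_distrib)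
qed

lemma poly_op_smult: "poly_op s D (smult c p) v = s c (poly_op s D p v)"
  by (simp add: poly_op_def scale_sum_right)

lemma poly_op_minus: "poly_op s D (- p) v = - poly_op s D p v"
  using poly_op_smult[of "-1" p v] by simp

lemma poly_op_sum: "poly_op s D (sum f A) v = (\<Sum>x\<in>A. poly_op s D (f x) v)"
  by (induction A rule: infinite_finite_induct) (auto simp: poly_op_add)

lemma poly_op_const: "poly_op s D [:c:] v = s c v"
  by (simp add: poly_op_def)

lemma poly_op_pCons: "poly_op s D (pCons a r) v = s a v + D (poly_op s D r v)"
proof -
  have "poly_op s D (pCons a r) v = (\<Sum>k\<le>Suc (degree r). s (coeff (pCons a r) k) ((D ^^ k) v))"
    by (rule poly_op_bound) (simp add: degree_pCons_le)
  also have "\<dots> = s a v + (\<Sum>k\<le>degree r. s (coeff r k) ((D ^^ Suc k) v))"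
    by (simp only: sum.atMost_Suc_shift coeff_pCons_0 coeff_pCons_Suc funpow_0 id_def)
  also have "\<dots> = s a v + D (poly_op s D r v)"
    by (simp add: poly_op_def lin_sum[OF lin_D] lin_scale[OF lin_D])
  finally show ?thesis .
qed

lemma poly_op_X: "poly_op s D poly_X v = D v"
  by (simp add: poly_op_pCons)

lemma poly_op_mult: "poly_op s D (p * q) v = poly_op s D p (poly_op s D q v)"
proof (induction p)
  case 0
  then show ?case by simp
next
  case (pCons a p)
  have "pCons a p * q = smult a q + pCons 0 (p * q)"
    by simp
  then show ?case
    by (simp only: poly_op_add poly_op_smult poly_op_pCons pCons.IH) simp
qed

lemma poly_op_X_power: "poly_op s D (poly_X ^ k) v = (D ^^ k) v"
proof (induction k)
  case (Suc k)
  then show ?case by (simp only: power_Suc poly_op_mult poly_op_X) simp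
qed simp

lemma poly_op_commute:
  assumes "lin s s f" "\<And>v. f (D v) = D (f v)"
  shows "f (poly_op s D r v) = poly_op s D r (f v)"
  using funpow_commute[of f D D, OF assms(2)] assms(1)
  by (simp add: poly_op_def lin_sum lin_scale)

end

section \<open>Substituting polynomials in \<open>\<partial>\<close> for \<open>\<lambda>\<close>\<close>

definition lam_subst :: "(complex \<Rightarrow> 'a::ab_group_add \<Rightarrow> 'a) \<Rightarrow> ('a \<Rightarrow> 'a) \<Rightarrow> (nat \<Rightarrow> 'a) \<Rightarrow> complex poly \<Rightarrow> 'a" where
  "lam_subst s D g P = (\<Sum>n\<in>{n. g n \<noteq> 0}. poly_op s D (P ^ n) (g n))"

definition lam_subst2 :: "(complex \<Rightarrow> 'a::ab_group_add \<Rightarrow> 'a) \<Rightarrow> ('a \<Rightarrow> 'a) \<Rightarrow> (nat \<Rightarrow> nat \<Rightarrow> 'a)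
    \<Rightarrow> complex poly \<Rightarrow> complex poly \<Rightarrow> 'a" where
  "lam_subst2 s D F P Q = lam_subst s D (\<lambda>l. lam_subst s D (F l) Q) P"

definition subst_neg_coeff :: "nat \<Rightarrow> nat \<Rightarrow> 'a::comm_ring_1 poly \<Rightarrow> 'a poly" where
  "subst_neg_coeff n k Y = (if k \<le> n then smult (of_nat (n choose k) * (- 1) ^ n) (Y ^ (n - k)) else 0)"

lemma smult_sum_right: "smult c (sum f A) = (\<Sum>x\<in>A. smult c (f x))"
  by (induction A rule: infinite_finite_induct) (simp_all add: smult_add_right)

lemma pcompose_power_left: "pcompose (p ^ n) r = pcompose p r ^ n"
  by (induction n) (simp_all add: pcompose_mult pcompose_1)

lemma sum_subst_neg_coeff:
  assumes "n \<le> N"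
  shows "(\<Sum>k\<le>N. Q ^ k * subst_neg_coeff n k Y) = (- Q - Y) ^ n"
proof -
  have "(\<Sum>k\<le>N. Q ^ k * subst_neg_coeff n k Y) = (\<Sum>k\<le>n. Q ^ k * subst_neg_coeff n k Y)"
    by (rule sum.mono_neutral_right) (use assms in \<open>auto simp: subst_neg_coeff_def\<close>)
  also have "\<dots> = smult ((- 1) ^ n) ((Q + Y) ^ n)"
    by (simp add: binomial_ring subst_neg_coeff_def smult_sum_right of_nat_poly ac_simps)
  also have "\<dots> = (smult (- 1) (Q + Y)) ^ n"
    by (simp only: smult_power)
  finally show ?thesis by simp
qed

lemma pcompose_subst_neg_coeff: "pcompose (subst_neg_coeff n k poly_X) Y = subst_neg_coeff n k Y"
  by (simp add: subst_neg_coeff_def pcompose_smult pcompose_pCons pcompose_power_left)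

lemma sum_swap_nested_pairs:
  "(\<Sum>l\<in>A. \<Sum>m\<in>B. \<Sum>p\<in>C. \<Sum>q\<in>E. f l m p q) = (\<Sum>p\<in>C. \<Sum>q\<in>E. \<Sum>l\<in>A. \<Sum>m\<in>B. f l m p q)"
proof -
  have "(\<Sum>l\<in>A. \<Sum>m\<in>B. \<Sum>p\<in>C. \<Sum>q\<in>E. f l m p q) = (\<Sum>l\<in>A. \<Sum>p\<in>C. \<Sum>m\<in>B. \<Sum>q\<in>E. f l m p q)"
    by (intro sum.cong refl) (rule sum.swap)
  also have "\<dots> = (\<Sum>l\<in>A. \<Sum>p\<in>C. \<Sum>q\<in>E. \<Sum>m\<in>B. f l m p q)"
    by (intro sum.cong refl) (rule sum.swap)
  also have "\<dots> = (\<Sum>p\<in>C. \<Sum>l\<in>A. \<Sum>q\<in>E. \<Sum>m\<in>B. f l m p q)"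
    by (rule sum.swap)
  also have "\<dots> = (\<Sum>p\<in>C. \<Sum>q\<in>E. \<Sum>l\<in>A. \<Sum>m\<in>B. f l m p q)"
    by (intro sum.cong refl) (rule sum.swap)
  finally show ?thesis .
qed

lemma sum_delta_binomial:
  fixes P Q :: "'a::comm_semiring_1"
  assumes "p \<le> N" "q \<le> N"
  shows "(\<Sum>l\<le>2 * N. \<Sum>m\<le>2 * N. if p \<le> l \<and> q = l - p + m then P ^ l * Q ^ m * of_nat (q choose m) else 0)
    = P ^ p * (P + Q) ^ q"
proof -
  have "(\<Sum>l\<le>2 * N. \<Sum>m\<le>2 * N. if p \<le> l \<and> q = l - p + m then P ^ l * Q ^ m * of_nat (q choose m) else 0)
      = (\<Sum>m\<le>2 * N. \<Sum>l\<le>2 * N.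
          if l = p + q - m then (if m \<le> q then P ^ l * Q ^ m * of_nat (q choose m) else 0) else 0)"
    by (subst sum.swap) (intro sum.cong refl, auto)
  also have "\<dots> = (\<Sum>m\<le>2 * N. if m \<le> q then P ^ (p + q - m) * Q ^ m * of_nat (q choose m) else 0)"
    using assms by (intro sum.cong refl) (auto simp: sum.delta')
  also have "\<dots> = (\<Sum>m\<le>q. P ^ (p + q - m) * Q ^ m * of_nat (q choose m))"
  proof -
    have "{m \<in> {..2 * N}. m \<le> q} = {..q}"
      using assms by auto
    then show ?thesis
      by (simp flip: sum.inter_filter)
  qed
  also have "\<dots> = P ^ p * (Q + P) ^ q"
    unfolding binomial_ring sum_distrib_left
    by (intro sum.cong refl) (simp add: power_add ac_simps flip: add_diff_assoc)
  finally show ?thesis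
    by (simp add: add.commute)
qed

context dmodule
begin

lemma lin_uminus: "lin s s uminus"
  by (simp add: lin_def)

lemma lam_subst_vanishes_beyond:
  "vanishes_beyond N g \<Longrightarrow> lam_subst s D g P = (\<Sum>n\<le>N. poly_op s D (P ^ n) (g n))"
  unfolding lam_subst_def
  by (rule sum.mono_neutral_left) (auto simp: vanishes_beyond_def not_le[symmetric])

lemma lam_subst_commute:
  assumes "lin s s f" "\<And>v. f (D v) = D (f v)" "fin_supp g"
  shows "lam_subst s D (\<lambda>n. f (g n)) P = f (lam_subst s D g P)"
proof -
  obtain N where N: "vanishes_beyond N g"
    using assms(3) fin_supp_iff_vanishes_beyond by blast
  then have "vanishes_beyond N (\<lambda>n. f (g n))"
    using lin_zero[OF assms(1)] by (simp add: vanishes_beyond_def)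
  with N show ?thesis
    by (simp add: lam_subst_vanishes_beyond lin_sum[OF assms(1)] poly_op_commute[OF assms(1,2)])
qed

lemma lam_subst_D: "fin_supp g \<Longrightarrow> lam_subst s D (\<lambda>n. D (g n)) P = D (lam_subst s D g P)"
  by (rule lam_subst_commute[OF lin_D]) simp_all

lemma lam_subst_scale: "fin_supp g \<Longrightarrow> lam_subst s D (\<lambda>n. s c (g n)) P = s c (lam_subst s D g P)"
  by (rule lam_subst_commute[OF lin_scale_const]) (simp_all add: lin_scale[OF lin_D])

lemma lam_subst_minus: "fin_supp g \<Longrightarrow> lam_subst s D (\<lambda>n. - g n) P = - lam_subst s D g P"
  by (rule lam_subst_commute[OF lin_uminus]) (simp_all add: lin_minus[OF lin_D])

lemma lam_subst_add:
  assumes "fin_supp g" "fin_supp h"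
  shows "lam_subst s D (\<lambda>n. g n + h n) P = lam_subst s D g P + lam_subst s D h P"
proof -
  obtain N where N: "vanishes_beyond N g" "vanishes_beyond N h"
    using assms by (rule fin_supp_common_bound)
  then have "vanishes_beyond N (\<lambda>n. g n + h n)"
    by (simp add: vanishes_beyond_def)
  with N show ?thesis
    by (simp add: lam_subst_vanishes_beyond lin_add[OF lin_poly_op] sum.distrib)
qed

lemma lam_subst_sum:
  "finite A \<Longrightarrow> (\<And>n. n \<in> A \<Longrightarrow> fin_supp (g n)) \<Longrightarrow>
    lam_subst s D (\<lambda>l. \<Sum>n\<in>A. g n l) P = (\<Sum>n\<in>A. lam_subst s D (g n) P)"
proof (induction A rule: finite_induct)
  case empty
  then show ?case by (simp add: lam_subst_def)
next
  case (insert x F)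
  then show ?case by (simp add: lam_subst_add fin_supp_sum)
qed

lemma lam_subst_lam_mul:
  assumes "fin_supp g"
  shows "lam_subst s D (lam_mul g) P = poly_op s D P (lam_subst s D g P)"
proof -
  obtain N where N: "vanishes_beyond N g"
    using assms fin_supp_iff_vanishes_beyond by blast
  then have "vanishes_beyond (Suc N) (lam_mul g)"
    by (auto simp: vanishes_beyond_def lam_mul_def)
  then have "lam_subst s D (lam_mul g) P = (\<Sum>n\<le>Suc N. poly_op s D (P ^ n) (lam_mul g n))"
    by (rule lam_subst_vanishes_beyond)
  also have "\<dots> = (\<Sum>n\<le>N. poly_op s D (P ^ Suc n) (g n))"
    by (simp only: sum.atMost_Suc_shift) (simp add: lam_mul_def)
  also have "\<dots> = poly_op s D P (lam_subst s D g P)"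
    by (simp add: lam_subst_vanishes_beyond[OF N] lin_sum[OF lin_poly_op] poly_op_mult)
  finally show ?thesis .
qed

lemma lam_subst_const: "vanishes_beyond N g \<Longrightarrow> lam_subst s D g [:x:] = (\<Sum>n\<le>N. s (x ^ n) (g n))"
  by (simp add: lam_subst_vanishes_beyond poly_const_pow poly_op_const)

lemma subst_neg_eq_sum:
  assumes "vanishes_beyond N g"
  shows "subst_neg s D g k = (\<Sum>n\<le>N. poly_op s D (subst_neg_coeff n k poly_X) (g n))"
proof -
  have "subst_neg s D g k = (\<Sum>n\<in>{n. k \<le> n \<and> g n \<noteq> 0}. poly_op s D (subst_neg_coeff n k poly_X) (g n))"
    unfolding subst_neg_def
    by (rule sum.cong) (auto simp: subst_neg_coeff_def poly_op_smult poly_op_X_power)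
  also have "\<dots> = (\<Sum>n\<le>N. poly_op s D (subst_neg_coeff n k poly_X) (g n))"
    by (rule sum.mono_neutral_left)
      (use assms in \<open>auto simp: vanishes_beyond_def subst_neg_coeff_def not_le[symmetric]\<close>)
  finally show ?thesis .
qed

lemma vanishes_beyond_subst_neg: "vanishes_beyond N g \<Longrightarrow> vanishes_beyond N (subst_neg s D g)"
  by (auto simp: vanishes_beyond_def subst_neg_eq_sum subst_neg_coeff_def)

lemma fin_supp_subst_neg: "fin_supp g \<Longrightarrow> fin_supp (subst_neg s D g)"
  using vanishes_beyond_subst_neg by (auto simp: fin_supp_iff_vanishes_beyond)

lemma subst_neg_commute:
  assumes "lin s s f" "\<And>v. f (D v) = D (f v)" "fin_supp g"
  shows "f (subst_neg s D g k) = subst_neg s D (\<lambda>n. f (g n)) k"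
proof -
  obtain N where N: "vanishes_beyond N g"
    using assms(3) fin_supp_iff_vanishes_beyond by blast
  then have "vanishes_beyond N (\<lambda>n. f (g n))"
    using lin_zero[OF assms(1)] by (simp add: vanishes_beyond_def)
  with N show ?thesis
    by (simp add: subst_neg_eq_sum lin_sum[OF assms(1)] poly_op_commute[OF assms(1,2)])
qed

lemma subst_neg_scale: "fin_supp g \<Longrightarrow> subst_neg s D (\<lambda>n. s c (g n)) k = s c (subst_neg s D g k)"
  by (rule subst_neg_commute[OF lin_scale_const, symmetric]) (simp_all add: lin_scale[OF lin_D])

lemma subst_neg_sgnx:
  "fin_supp g \<Longrightarrow> subst_neg s D (\<lambda>n. sgnx i j (g n)) k = sgnx i j (subst_neg s D g k)"
  by (cases i; cases j)
    (simp_all add: sgnx_def subst_neg_commute[OF lin_uminus] lin_minus[OF lin_D])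

lemma subst_neg_add:
  assumes "fin_supp g" "fin_supp h"
  shows "subst_neg s D (\<lambda>n. g n + h n) k = subst_neg s D g k + subst_neg s D h k"
proof -
  obtain N where N: "vanishes_beyond N g" "vanishes_beyond N h"
    using assms by (rule fin_supp_common_bound)
  then have "vanishes_beyond N (\<lambda>n. g n + h n)"
    by (simp add: vanishes_beyond_def)
  with N show ?thesis
    by (simp add: subst_neg_eq_sum lin_add[OF lin_poly_op] sum.distrib)
qed

lemma subst_neg_diff:
  assumes "fin_supp g" "fin_supp h"
  shows "subst_neg s D (\<lambda>n. g n - h n) k = subst_neg s D g k - subst_neg s D h k"
  using subst_neg_add[OF assms(1) fin_supp_map[of uminus, OF _ assms(2)]]
    subst_neg_commute[OF lin_uminus _ assms(2), of k]
  by (simp add: lin_minus[OF lin_D])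

lemma lam_subst_subst_neg:
  assumes "fin_supp g"
  shows "lam_subst s D (subst_neg s D g) P = lam_subst s D g (- P - poly_X)"
proof -
  obtain N where N: "vanishes_beyond N g"
    using assms fin_supp_iff_vanishes_beyond by blast
  have "lam_subst s D (subst_neg s D g) P
      = (\<Sum>k\<le>N. poly_op s D (P ^ k) (\<Sum>n\<le>N. poly_op s D (subst_neg_coeff n k poly_X) (g n)))"
    by (simp add: lam_subst_vanishes_beyond[OF vanishes_beyond_subst_neg[OF N]] subst_neg_eq_sum[OF N])
  also have "\<dots> = (\<Sum>n\<le>N. poly_op s D (\<Sum>k\<le>N. P ^ k * subst_neg_coeff n k poly_X) (g n))"
    by (simp only: lin_sum[OF lin_poly_op] poly_op_sum poly_op_mult) (rule sum.swap)
  also have "\<dots> = (\<Sum>n\<le>N. poly_op s D ((- P - poly_X) ^ n) (g n))"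
    by (simp add: sum_subst_neg_coeff)
  also have "\<dots> = lam_subst s D g (- P - poly_X)"
    by (simp add: lam_subst_vanishes_beyond[OF N])
  finally show ?thesis .
qed

lemma scaled_power_sum_diff:
  "(\<Sum>n\<le>N. s (x ^ n) (g n)) - (\<Sum>n\<le>N. s (a ^ n) (g n))
    = s (x - a) (\<Sum>k<N. s (x ^ k) (\<Sum>n\<in>{Suc k..N}. s (a ^ (n - Suc k)) (g n)))"
proof -
  have "s (x - a) (\<Sum>k<N. s (x ^ k) (\<Sum>n\<in>{Suc k..N}. s (a ^ (n - Suc k)) (g n)))
      = (\<Sum>k<N. \<Sum>n\<in>{Suc k..N}. s ((x - a) * (a ^ (n - Suc k) * x ^ k)) (g n))"
    by (simp add: scale_sum_right ac_simps)
  also have "\<dots> = (\<Sum>n\<le>N. \<Sum>k<n. s ((x - a) * (a ^ (n - Suc k) * x ^ k)) (g n))"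
    by (rule sum.nested_swap'[symmetric])
  also have "\<dots> = (\<Sum>n\<le>N. s (x ^ n - a ^ n) (g n))"
    by (simp add: power_diff_sumr2 scale_sum_left sum_distrib_left)
  finally show ?thesis
    by (simp add: scale_left_diff_distrib sum_subtractf)
qed

lemma scaled_power_sum_eq_0_imp_coeffs_0:
  "infinite S \<Longrightarrow> \<forall>x\<in>S. (\<Sum>n\<le>N. s (x ^ n) (g n)) = 0 \<Longrightarrow> \<forall>n\<le>N. g n = 0"
proof (induction N arbitrary: g S)
  case 0
  then obtain x where "x \<in> S" using infinite_imp_nonempty by blast
  with 0 show ?case by auto
next
  case (Suc N)
  obtain a where a: "a \<in> S" using Suc.prems(1) infinite_imp_nonempty by blast
  define h where "h k = (\<Sum>n\<in>{Suc k..Suc N}. s (a ^ (n - Suc k)) (g n))" for k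
  have factor: "s (x - a) (\<Sum>k\<le>N. s (x ^ k) (h k))
      = (\<Sum>n\<le>Suc N. s (x ^ n) (g n)) - (\<Sum>n\<le>Suc N. s (a ^ n) (g n))" for x
    unfolding h_def by (simp only: scaled_power_sum_diff lessThan_Suc_atMost)
  have "infinite (S - {a})"
    using Suc.prems(1) by simp
  moreover have "\<forall>x\<in>S - {a}. (\<Sum>k\<le>N. s (x ^ k) (h k)) = 0"
  proof
    fix x assume x: "x \<in> S - {a}"
    then have "s (x - a) (\<Sum>k\<le>N. s (x ^ k) (h k)) = 0"
      unfolding factor using a Suc.prems(2) by simp
    with x show "(\<Sum>k\<le>N. s (x ^ k) (h k)) = 0"
      by simp
  qed
  ultimately have "\<forall>k\<le>N. h k = 0"
    by (rule Suc.IH)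
  then have "h N = 0"
    by simp
  then have g_top: "g (Suc N) = 0"
    by (simp add: h_def)
  then have "\<forall>x\<in>S. (\<Sum>n\<le>N. s (x ^ n) (g n)) = 0"
    using Suc.prems(2) by simp
  then have "\<forall>n\<le>N. g n = 0"
    by (rule Suc.IH[OF Suc.prems(1)])
  with g_top show ?case
    using le_Suc_eq by auto
qed

lemma lam_subst_inject:
  assumes "fin_supp g" "fin_supp h" "\<And>x. lam_subst s D g [:x:] = lam_subst s D h [:x:]"
  shows "g = h"
proof -
  obtain N where N: "vanishes_beyond N g" "vanishes_beyond N h"
    using assms(1,2) by (rule fin_supp_common_bound)
  have "(\<Sum>n\<le>N. s (x ^ n) (g n - h n)) = 0" for x
    using assms(3)[of x] by (simp add: lam_subst_const[OF N(1)] lam_subst_const[OF N(2)]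
        scale_right_diff_distrib sum_subtractf)
  then have "\<forall>n\<le>N. g n - h n = 0"
    by (intro scaled_power_sum_eq_0_imp_coeffs_0[of UNIV]) (simp_all add: infinite_UNIV_char_0)
  with N show ?thesis
    unfolding fun_eq_iff vanishes_beyond_def by (metis eq_iff_diff_eq_0 not_le)
qed

lemma subst_neg_subst_neg: "fin_supp g \<Longrightarrow> subst_neg s D (subst_neg s D g) = g"
  by (rule lam_subst_inject) (simp_all add: fin_supp_subst_neg lam_subst_subst_neg)

lemma subst_neg_D_plus_lam_mul:
  assumes g: "fin_supp g"
  shows "subst_neg s D (\<lambda>n. D (g n) + lam_mul g n) = (\<lambda>k. - lam_mul (subst_neg s D g) k)"
proof (rule lam_subst_inject)
  have fin: "fin_supp (\<lambda>n. D (g n) + lam_mul g n)"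
    using g by (intro fin_supp_add fin_supp_map[of D] fin_supp_lam_mul) simp_all
  then show "fin_supp (subst_neg s D (\<lambda>n. D (g n) + lam_mul g n))"
    by (rule fin_supp_subst_neg)
  show "fin_supp (\<lambda>k. - lam_mul (subst_neg s D g) k)"
    using g by (intro fin_supp_map[of uminus] fin_supp_lam_mul fin_supp_subst_neg) simp_all
  fix x
  let ?P = "- [:x:] - poly_X" and ?G = "lam_subst s D g (- [:x:] - poly_X)"
  have "lam_subst s D (subst_neg s D (\<lambda>n. D (g n) + lam_mul g n)) [:x:] = D ?G + poly_op s D ?P ?G"
    using g by (simp add: lam_subst_subst_neg fin lam_subst_add fin_supp_map[of D] fin_supp_lam_mul
        lam_subst_D lam_subst_lam_mul)
  also have "\<dots> = poly_op s D (poly_X + ?P) ?G"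
    by (simp only: poly_op_add poly_op_X)
  also have "\<dots> = poly_op s D (- [:x:]) ?G"
    by simp
  also have "\<dots> = - poly_op s D [:x:] ?G"
    by (rule poly_op_minus)
  also have "\<dots> = lam_subst s D (\<lambda>k. - lam_mul (subst_neg s D g) k) [:x:]"
    using g by (simp add: lam_subst_minus fin_supp_lam_mul fin_supp_subst_neg lam_subst_lam_mul
        lam_subst_subst_neg)
  finally show "lam_subst s D (subst_neg s D (\<lambda>n. D (g n) + lam_mul g n)) [:x:]
      = lam_subst s D (\<lambda>k. - lam_mul (subst_neg s D g) k) [:x:]" .
qed

lemma subst_neg_minus_lam_mul:
  assumes g: "fin_supp g"
  shows "subst_neg s D (\<lambda>n. - lam_mul g n) = (\<lambda>k. D (subst_neg s D g k) + lam_mul (subst_neg s D g) k)"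
proof -
  have fin: "fin_supp (\<lambda>k. D (subst_neg s D g k) + lam_mul (subst_neg s D g) k)"
    using g by (intro fin_supp_add fin_supp_map[of D] fin_supp_lam_mul fin_supp_subst_neg) simp_all
  have "subst_neg s D (\<lambda>n. - lam_mul g n)
      = subst_neg s D (subst_neg s D (\<lambda>k. D (subst_neg s D g k) + lam_mul (subst_neg s D g) k))"
    using subst_neg_D_plus_lam_mul[OF fin_supp_subst_neg[OF g]] by (simp add: subst_neg_subst_neg g)
  with fin show ?thesis
    by (simp add: subst_neg_subst_neg)
qed

lemma lam_subst2_vanishes_beyond2:
  assumes "vanishes_beyond2 N F"
  shows "lam_subst2 s D F P Q = (\<Sum>l\<le>N. \<Sum>m\<le>N. poly_op s D (P ^ l * Q ^ m) (F l m))"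
proof -
  have row: "lam_subst s D (F l) Q = (\<Sum>m\<le>N. poly_op s D (Q ^ m) (F l m))" for l
    using assms by (intro lam_subst_vanishes_beyond) (simp add: vanishes_beyond_def vanishes_beyond2_def)
  have "vanishes_beyond N (\<lambda>l. lam_subst s D (F l) Q)"
    using assms by (simp add: vanishes_beyond_def vanishes_beyond2_def row)
  then show ?thesis
    by (simp add: lam_subst2_def lam_subst_vanishes_beyond row lin_sum[OF lin_poly_op] poly_op_mult)
qed

lemma lam_subst2_swap:
  assumes "fin_supp2 F"
  shows "lam_subst2 s D (\<lambda>l m. F m l) P Q = lam_subst2 s D F Q P"
proof -
  obtain N where N: "vanishes_beyond2 N F"
    using assms by (rule fin_supp2_vanishes_beyond2)
  then have "vanishes_beyond2 N (\<lambda>l m. F m l)"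
    by (auto simp: vanishes_beyond2_def)
  with N show ?thesis
    by (simp add: lam_subst2_vanishes_beyond2 mult.commute) (rule sum.swap)
qed

lemma lam_subst2_add:
  assumes "fin_supp2 F" "fin_supp2 G"
  shows "lam_subst2 s D (\<lambda>l m. F l m + G l m) P Q = lam_subst2 s D F P Q + lam_subst2 s D G P Q"
proof -
  obtain N where N: "vanishes_beyond2 N F" "vanishes_beyond2 N G"
    using assms by (rule fin_supp2_common_bound)
  then have "vanishes_beyond2 N (\<lambda>l m. F l m + G l m)"
    by (simp add: vanishes_beyond2_def)
  with N show ?thesis
    by (simp add: lam_subst2_vanishes_beyond2 lin_add[OF lin_poly_op] sum.distrib)
qed

lemma lam_subst2_diff:
  assumes "fin_supp2 F" "fin_supp2 G"
  shows "lam_subst2 s D (\<lambda>l m. F l m - G l m) P Q = lam_subst2 s D F P Q - lam_subst2 s D G P Q"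
proof -
  obtain N where N: "vanishes_beyond2 N F" "vanishes_beyond2 N G"
    using assms by (rule fin_supp2_common_bound)
  then have "vanishes_beyond2 N (\<lambda>l m. F l m - G l m)"
    by (simp add: vanishes_beyond2_def)
  with N show ?thesis
    by (simp add: lam_subst2_vanishes_beyond2 lin_diff[OF lin_poly_op] sum_subtractf)
qed

lemma lam_subst2_sgnx:
  assumes "fin_supp2 F"
  shows "lam_subst2 s D (\<lambda>l m. sgnx i j (F l m)) P Q = sgnx i j (lam_subst2 s D F P Q)"
proof -
  obtain N where N: "vanishes_beyond2 N F"
    using assms by (rule fin_supp2_vanishes_beyond2)
  then have "vanishes_beyond2 N (\<lambda>l m. sgnx i j (F l m))"
    by (simp add: vanishes_beyond2_def sgnx_def)
  with N show ?thesis
    by (cases i; cases j)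
      (simp_all add: sgnx_def lam_subst2_vanishes_beyond2 lin_minus[OF lin_poly_op] sum_negf)
qed

lemma fin_supp2_subst_neg_right: "fin_supp2 F \<Longrightarrow> fin_supp2 (\<lambda>l m. subst_neg s D (F l) m)"
proof -
  assume "fin_supp2 F"
  then obtain N where N: "vanishes_beyond2 N F"
    by (rule fin_supp2_vanishes_beyond2)
  have "vanishes_beyond N (subst_neg s D (F l))" for l
    using N by (intro vanishes_beyond_subst_neg) (simp add: vanishes_beyond_def vanishes_beyond2_def)
  moreover have "subst_neg s D (F l) m = 0" if "N < l" for l m
    using N that by (simp add: vanishes_beyond2_def subst_neg_def)
  ultimately have "vanishes_beyond2 N (\<lambda>l m. subst_neg s D (F l) m)"
    by (auto simp: vanishes_beyond2_def vanishes_beyond_def)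
  then show ?thesis
    by (rule vanishes_beyond2_imp_fin_supp2)
qed

lemma lam_subst2_subst_neg_right:
  "fin_supp2 F \<Longrightarrow> lam_subst2 s D (\<lambda>l m. subst_neg s D (F l) m) P Q = lam_subst2 s D F P (- Q - poly_X)"
  by (simp add: lam_subst2_def lam_subst_subst_neg fin_supp2_row)

lemma lam_subst2_subst_neg_left:
  assumes "fin_supp2 F"
  shows "lam_subst2 s D (\<lambda>l m. subst_neg s D (\<lambda>n. F n m) l) P Q = lam_subst2 s D F (- P - poly_X) Q"
proof -
  have F': "fin_supp2 (\<lambda>m l. F l m)"
    using assms by (rule fin_supp2_swap)
  have "lam_subst2 s D (\<lambda>l m. subst_neg s D (\<lambda>n. F n m) l) P Q
      = lam_subst2 s D (\<lambda>m l. subst_neg s D (\<lambda>n. F n m) l) Q P"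
    by (rule lam_subst2_swap[OF fin_supp2_subst_neg_right[OF F']])
  also have "\<dots> = lam_subst2 s D (\<lambda>m l. F l m) Q (- P - poly_X)"
    by (rule lam_subst2_subst_neg_right[OF F'])
  also have "\<dots> = lam_subst2 s D F (- P - poly_X) Q"
    by (rule lam_subst2_swap[OF assms])
  finally show ?thesis .
qed

lemma vanishes_beyond2_subst_sum:
  assumes "vanishes_beyond2 N c"
  shows "vanishes_beyond2 (2 * N) (subst_sum s c)"
  unfolding vanishes_beyond2_def
proof (intro allI impI)
  fix l m assume lm: "2 * N < l \<or> 2 * N < m"
  show "subst_sum s c l m = 0"
    unfolding subst_sum_def
  proof (rule sum.neutral, rule ballI)
    fix p assume "p \<in> {..l}"
    then have "N < p \<or> N < l - p + m"
      using lm by auto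
    then show "s (of_nat ((l - p + m) choose m)) (c p (l - p + m)) = 0"
      using assms by (auto simp: vanishes_beyond2_def)
  qed
qed

lemma subst_sum_eq_delta_sum:
  assumes "vanishes_beyond2 N c" "l \<le> 2 * N"
  shows "subst_sum s c l m
    = (\<Sum>p\<le>2 * N. \<Sum>q\<le>2 * N. if p \<le> l \<and> q = l - p + m then s (of_nat (q choose m)) (c p q) else 0)"
proof -
  have "(\<Sum>q\<le>2 * N. if p \<le> l \<and> q = l - p + m then s (of_nat (q choose m)) (c p q) else 0)
      = (if p \<le> l then s (of_nat ((l - p + m) choose m)) (c p (l - p + m)) else 0)" for p
    using assms(1) by (cases "p \<le> l") (auto simp: sum.delta' vanishes_beyond2_def)
  moreover have "{p \<in> {..2 * N}. p \<le> l} = {..l}"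
    using assms(2) by auto
  ultimately show ?thesis
    by (simp add: subst_sum_def flip: sum.inter_filter)
qed

lemma lam_subst2_subst_sum:
  assumes "fin_supp2 c"
  shows "lam_subst2 s D (subst_sum s c) P Q = lam_subst2 s D c P (P + Q)"
proof -
  obtain N where N: "vanishes_beyond2 N c"
    using assms by (rule fin_supp2_vanishes_beyond2)
  define K where "K = 2 * N"
  have c_K: "vanishes_beyond2 K c"
    using N by (rule vanishes_beyond2_mono) (simp add: K_def)
  have sum_K: "vanishes_beyond2 K (subst_sum s c)"
    unfolding K_def using N by (rule vanishes_beyond2_subst_sum)
  have poly_op_if: "poly_op s D X (if b then s (of_nat n) v else 0) = poly_op s D (if b then X * of_nat n else 0) v"
    for X b n v
    by (cases b) (simp_all add: of_nat_poly poly_op_smult lin_scale[OF lin_poly_op])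
  have "lam_subst2 s D (subst_sum s c) P Q = (\<Sum>l\<le>K. \<Sum>m\<le>K. poly_op s D (P ^ l * Q ^ m) (subst_sum s c l m))"
    by (rule lam_subst2_vanishes_beyond2[OF sum_K])
  also have "\<dots> = (\<Sum>l\<le>K. \<Sum>m\<le>K. \<Sum>p\<le>K. \<Sum>q\<le>K.
      poly_op s D (if p \<le> l \<and> q = l - p + m then P ^ l * Q ^ m * of_nat (q choose m) else 0) (c p q))"
    using N by (intro sum.cong refl)
      (simp add: K_def subst_sum_eq_delta_sum lin_sum[OF lin_poly_op] poly_op_if)
  also have "\<dots> = (\<Sum>p\<le>K. \<Sum>q\<le>K. poly_op s D (\<Sum>l\<le>K. \<Sum>m\<le>K.
      if p \<le> l \<and> q = l - p + m then P ^ l * Q ^ m * of_nat (q choose m) else 0) (c p q))"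
    unfolding poly_op_sum by (rule sum_swap_nested_pairs)
  also have "\<dots> = (\<Sum>p\<le>K. \<Sum>q\<le>K. poly_op s D (P ^ p * (P + Q) ^ q) (c p q))"
  proof (intro sum.cong refl)
    fix p q
    have "c p q = 0" if "\<not> (p \<le> N \<and> q \<le> N)"
      using N that by (auto simp: vanishes_beyond2_def)
    then show "poly_op s D (\<Sum>l\<le>K. \<Sum>m\<le>K.
        if p \<le> l \<and> q = l - p + m then P ^ l * Q ^ m * of_nat (q choose m) else 0) (c p q)
      = poly_op s D (P ^ p * (P + Q) ^ q) (c p q)"
      by (cases "p \<le> N \<and> q \<le> N") (simp_all add: K_def sum_delta_binomial)
  qed
  also have "\<dots> = lam_subst2 s D c P (P + Q)"
    by (rule lam_subst2_vanishes_beyond2[OF c_K, symmetric])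
  finally show ?thesis .
qed

lemma fin_supp2_subst_sum: "fin_supp2 c \<Longrightarrow> fin_supp2 (subst_sum s c)"
proof -
  assume "fin_supp2 c"
  then obtain N where N: "vanishes_beyond2 N c"
    by (rule fin_supp2_vanishes_beyond2)
  then have "vanishes_beyond2 (2 * N) (subst_sum s c)"
    by (rule vanishes_beyond2_subst_sum)
  then show ?thesis
    by (rule vanishes_beyond2_imp_fin_supp2)
qed

lemma lam_subst2_inject:
  assumes "fin_supp2 F" "fin_supp2 G" "\<And>x y. lam_subst2 s D F [:x:] [:y:] = lam_subst2 s D G [:x:] [:y:]"
  shows "F = G"
proof -
  obtain N where N: "vanishes_beyond2 N F" "vanishes_beyond2 N G"
    using assms(1,2) by (rule fin_supp2_common_bound)
  have rows: "fin_supp (\<lambda>l. lam_subst s D (H l) [:y:])" if H: "vanishes_beyond2 N H"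
    for H :: "nat \<Rightarrow> nat \<Rightarrow> 'a" and y
  proof -
    have "H l = (\<lambda>_. 0)" if "N < l" for l
      using H that by (auto simp: vanishes_beyond2_def)
    then have "vanishes_beyond N (\<lambda>l. lam_subst s D (H l) [:y:])"
      by (simp add: vanishes_beyond_def lam_subst_def)
    then show ?thesis
      by (auto simp: fin_supp_iff_vanishes_beyond)
  qed
  have "(\<lambda>l. lam_subst s D (F l) [:y:]) = (\<lambda>l. lam_subst s D (G l) [:y:])" for y
    using assms(3) by (intro lam_subst_inject rows N) (simp add: lam_subst2_def)
  then have "lam_subst s D (F l) [:y:] = lam_subst s D (G l) [:y:]" for l y
    by meson
  then have "F l = G l" for l
    using assms(1,2) by (intro lam_subst_inject fin_supp2_row)
  then show ?thesis ..
qed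

end

section \<open>Graded spaces\<close>

locale graded =
  fixes s :: "complex \<Rightarrow> 'a::ab_group_add \<Rightarrow> 'a" and G :: "bool \<Rightarrow> 'a set"
  assumes graded_space: "graded_space s G"
begin

lemma csubspace_G: "csubspace s (G i)"
  using graded_space by (cases i) (auto simp: graded_space_def)

lemma zero_in_G: "0 \<in> G i"
  using csubspace_G[of i] by (simp add: csubspace_def)

lemma add_in_G: "x \<in> G i \<Longrightarrow> y \<in> G i \<Longrightarrow> x + y \<in> G i"
  using csubspace_G[of i] by (simp add: csubspace_def)

lemma scale_in_G: "x \<in> G i \<Longrightarrow> s c x \<in> G i"
  using csubspace_G[of i] by (simp add: csubspace_def)

lemma minus_in_G: "x \<in> G i \<Longrightarrow> - x \<in> G i"
  using scale_in_G[of x i "- 1"] graded_space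
  by (simp add: graded_space_def module.scale_minus_left module.scale_one)

lemma diff_in_G: "x \<in> G i \<Longrightarrow> y \<in> G i \<Longrightarrow> x - y \<in> G i"
  using add_in_G minus_in_G by (metis diff_conv_add_uminus)

lemma sum_in_G: "(\<And>a. a \<in> A \<Longrightarrow> f a \<in> G i) \<Longrightarrow> sum f A \<in> G i"
  by (induction A rule: infinite_finite_induct) (auto simp: zero_in_G add_in_G)

lemma sgnx_in_G: "x \<in> G i \<Longrightarrow> sgnx a b x \<in> G i"
  by (simp add: sgnx_def minus_in_G)

lemma in_both_G: "x \<in> G i \<Longrightarrow> x \<in> G (\<not> i) \<Longrightarrow> x = 0"
  using graded_space by (cases i) (auto simp: graded_space_def)

lemma gproj_unique: "y \<in> G i \<Longrightarrow> x - y \<in> G (\<not> i) \<Longrightarrow> gproj G i x = y"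
  unfolding gproj_def
proof (rule the1_equality)
  assume y: "y \<in> G i" "x - y \<in> G (\<not> i)"
  show "\<exists>!y. y \<in> G i \<and> x - y \<in> G (\<not> i)"
  proof (intro ex1I)
    fix y' assume y': "y' \<in> G i \<and> x - y' \<in> G (\<not> i)"
    have "y' - y \<in> G (\<not> i)"
      using diff_in_G[of "x - y" "\<not> i" "x - y'"] y y' by simp
    with y y' show "y' = y"
      using in_both_G diff_in_G by fastforce
  qed (use y in simp)
qed simp

lemma gproj_in_G: "gproj G i x \<in> G i" and gproj_diff_in_G: "x - gproj G i x \<in> G (\<not> i)"
proof -
  obtain y z where "y \<in> G False" "z \<in> G True" "x = y + z"
    using graded_space unfolding graded_space_def by blast
  then obtain y z where yz: "y \<in> G i" "z \<in> G (\<not> i)" "x = y + z"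
    by (cases i) (auto simp: add.commute)
  then have "gproj G i x = y"
    by (intro gproj_unique) auto
  with yz show "gproj G i x \<in> G i" "x - gproj G i x \<in> G (\<not> i)"
    by simp_all
qed

lemma gproj_id: "x \<in> G i \<Longrightarrow> gproj G i x = x"
  by (rule gproj_unique) (auto simp: zero_in_G)

lemma gproj_other: "x \<in> G i \<Longrightarrow> j \<noteq> i \<Longrightarrow> gproj G j x = 0"
proof (rule gproj_unique)
  assume "x \<in> G i" "j \<noteq> i"
  then show "x - 0 \<in> G (\<not> j)"
    by (cases i; cases j) simp_all
qed (rule zero_in_G)

lemma gproj_add: "gproj G i (x + y) = gproj G i x + gproj G i y"
proof (rule gproj_unique)
  show "gproj G i x + gproj G i y \<in> G i"
    by (intro add_in_G gproj_in_G)
  have "(x - gproj G i x) + (y - gproj G i y) \<in> G (\<not> i)"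
    by (intro add_in_G gproj_diff_in_G)
  then show "x + y - (gproj G i x + gproj G i y) \<in> G (\<not> i)"
    by (simp add: algebra_simps)
qed

lemma gproj_scale: "gproj G i (s c x) = s c (gproj G i x)"
proof (rule gproj_unique)
  show "s c (gproj G i x) \<in> G i"
    by (intro scale_in_G gproj_in_G)
  have "s c (x - gproj G i x) \<in> G (\<not> i)"
    by (intro scale_in_G gproj_diff_in_G)
  then show "s c x - s c (gproj G i x) \<in> G (\<not> i)"
    using graded_space by (simp add: graded_space_def module.scale_right_diff_distrib)
qed

lemma lin_gproj: "lin s s (gproj G i)"
  by (simp add: lin_def gproj_add gproj_scale)

lemma gproj_False_plus_True: "gproj G False x + gproj G True x = x"
proof -
  have "gproj G True x = x - gproj G False x"
    by (rule gproj_unique) (use gproj_diff_in_G[of x False] gproj_in_G[of False x] in auto)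
  then show ?thesis by simp
qed

end

lemma gproj_even_map:
  assumes "graded s G" "graded s' G'" "lin s s' f" "even_map G G' f"
  shows "f (gproj G i x) = gproj G' i (f x)"
proof (rule graded.gproj_unique[OF assms(2), symmetric])
  show "f (gproj G i x) \<in> G' i"
    using assms(4) graded.gproj_in_G[OF assms(1)] by (auto simp: even_map_def)
  show "f x - f (gproj G i x) \<in> G' (\<not> i)"
    using assms(4) graded.gproj_diff_in_G[OF assms(1), of x i]
    by (auto simp: even_map_def lin_diff[OF assms(3), symmetric])
qed

lemma lin_inv:
  assumes "bij f" "lin s s f"
  shows "lin s s (inv f)"
  using assms unfolding lin_def
  by (metis bij_inv_eq_iff)

lemma inv_commute:
  assumes "bij f" "\<And>x. f (g x) = g (f x)"
  shows "inv f (g x) = g (inv f x)"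
  by (metis assms bij_inv_eq_iff)

lemma even_map_inv:
  assumes "graded s G" "bij f" "lin s s f" "even_map G G f"
  shows "even_map G G (inv f)"
  unfolding even_map_def
proof (intro allI ballI)
  fix i x assume x: "x \<in> G i"
  have "f (gproj G (\<not> i) (inv f x)) = gproj G (\<not> i) x"
    using gproj_even_map[OF assms(1,1,3,4)] assms(2) by (metis bij_inv_eq_iff)
  also have "\<dots> = 0"
    using graded.gproj_other[OF assms(1) x] by simp
  finally have "gproj G (\<not> i) (inv f x) = 0"
    using assms(2) lin_zero[OF assms(3)] by (metis bij_is_inj injD)
  then have "gproj G i (inv f x) = inv f x"
    using graded.gproj_False_plus_True[OF assms(1), of "inv f x"] by (cases i) simp_all
  then show "inv f x \<in> G i"
    using graded.gproj_in_G[OF assms(1)] by metis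
qed

section \<open>The \<open>\<lambda>\<close>-product induced by an \<open>\<O>\<close>-operator\<close>

locale O_operator_setting =
  fixes sR :: "complex \<Rightarrow> 'r::ab_group_add \<Rightarrow> 'r" and GR :: "bool \<Rightarrow> 'r set"
    and DR \<alpha> \<beta> :: "'r \<Rightarrow> 'r" and brR :: "'r \<Rightarrow> 'r \<Rightarrow> nat \<Rightarrow> 'r"
    and sM :: "complex \<Rightarrow> 'm::ab_group_add \<Rightarrow> 'm" and GM :: "bool \<Rightarrow> 'm set"
    and DM \<phi> \<psi> :: "'m \<Rightarrow> 'm" and \<rho> :: "'r \<Rightarrow> 'm \<Rightarrow> nat \<Rightarrow> 'm" and T :: "'m \<Rightarrow> 'r"
  assumes conf_module: "bihom_conf_module sR GR DR brR \<alpha> \<beta> sM GM DM \<rho> \<phi> \<psi>"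
    and bij_phi: "bij \<phi>" and bij_psi: "bij \<psi>"
    and O_operator: "O_operator sR GR DR brR \<alpha> \<beta> sM GM DM \<rho> \<phi> \<psi> T"
begin

lemma graded_space_M: "graded_space sM GM"
  and lin_DM: "lin sM sM DM"
  and even_DM: "even_map GM GM DM"
  and lin_phi: "lin sM sM \<phi>"
  and lin_psi: "lin sM sM \<psi>"
  and even_phi: "even_map GM GM \<phi>"
  and even_psi: "even_map GM GM \<psi>"
  and lin_rho_left: "lin sR sM (\<lambda>a. \<rho> a v n)"
  and lin_rho_right: "lin sM sM (\<lambda>v. \<rho> a v n)"
  and fin_supp_rho: "fin_supp (\<rho> a v)"
  and rho_DR: "\<rho> (DR a) v = (\<lambda>n. - lam_mul (\<rho> a v) n)"
  and rho_DM: "\<rho> a (DM v) = (\<lambda>n. DM (\<rho> a v n) + lam_mul (\<rho> a v) n)"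
  and phi_rho: "\<phi> (\<rho> a v n) = \<rho> (\<alpha> a) (\<phi> v) n"
  and psi_rho: "\<psi> (\<rho> a v n) = \<rho> (\<beta> a) (\<psi> v) n"
  using conf_module by (simp_all add: bihom_conf_module_def)

lemma rho_in_GM: "a \<in> GR i \<Longrightarrow> v \<in> GM j \<Longrightarrow> \<rho> a v n \<in> GM (i \<noteq> j)"
  using conf_module by (simp add: bihom_conf_module_def)

lemma psi_phi [simp]: "\<psi> (\<phi> x) = \<phi> (\<psi> x)"
  and phi_DM: "\<phi> (DM x) = DM (\<phi> x)"
  and psi_DM: "\<psi> (DM x) = DM (\<psi> x)"
  using conf_module by (simp_all add: bihom_conf_module_def fun_eq_iff)

lemma rho_jacobi:
  "a \<in> GR i \<Longrightarrow> b \<in> GR j \<Longrightarrow>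
    subst_sum sM (\<lambda>p q. \<rho> (brR (\<beta> a) b p) (\<psi> v) q) l m
      = \<rho> (\<alpha> (\<beta> a)) (\<rho> b v m) l - sgnx i j (\<rho> (\<beta> b) (\<rho> (\<alpha> a) v l) m)"
  using conf_module unfolding bihom_conf_module_def by blast

lemma lin_T: "lin sM sR T"
  and even_T: "even_map GM GR T"
  using O_operator by (simp_all add: O_operator_def)

lemma T_DM: "T (DM x) = DR (T x)"
  and T_phi: "T (\<phi> x) = \<alpha> (T x)"
  and T_psi: "T (\<psi> x) = \<beta> (T x)"
  using O_operator by (simp_all add: O_operator_def fun_eq_iff)

lemma T_bracket:
  "u \<in> GM i \<Longrightarrow> v \<in> GM j \<Longrightarrow> brR (T u) (T v) = (\<lambda>n. T (prodT_h sM DM \<rho> \<phi> \<psi> T i j u v n))"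
  using O_operator unfolding O_operator_def by blast

sublocale M: dmodule sM DM
  using graded_space_M lin_DM
  by (simp add: dmodule_def vector_space_def dmodule_axioms_def graded_space_def module_def)

sublocale GrM: graded sM GM
  using graded_space_M by (rule graded.intro)

lemma inv_phi_phi [simp]: "inv \<phi> (\<phi> x) = x"
  and phi_inv_phi [simp]: "\<phi> (inv \<phi> x) = x"
  and inv_psi_psi [simp]: "inv \<psi> (\<psi> x) = x"
  and psi_inv_psi [simp]: "\<psi> (inv \<psi> x) = x"
  using bij_phi bij_psi by (simp_all add: bij_is_inj bij_is_surj surj_f_inv_f)

text \<open>In the simp normal form of words in \<open>\<phi>, \<psi>\<close> and their inverses, the \<open>\<phi>\<close>-letters are outside.\<close>

lemma psi_inv_phi [simp]: "\<psi> (inv \<phi> x) = inv \<phi> (\<psi> x)"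
  by (metis inv_phi_phi phi_inv_phi psi_phi)

lemma inv_psi_phi [simp]: "inv \<psi> (\<phi> x) = \<phi> (inv \<psi> x)"
  by (metis inv_psi_psi psi_inv_psi psi_phi)

lemma inv_psi_inv_phi [simp]: "inv \<psi> (inv \<phi> x) = inv \<phi> (inv \<psi> x)"
  by (metis inv_psi_psi psi_inv_psi psi_inv_phi)

lemma lin_inv_phi: "lin sM sM (inv \<phi>)"
  by (rule lin_inv[OF bij_phi lin_phi])

lemma lin_inv_psi: "lin sM sM (inv \<psi>)"
  by (rule lin_inv[OF bij_psi lin_psi])

lemma inv_phi_DM: "inv \<phi> (DM x) = DM (inv \<phi> x)"
  by (rule inv_commute[where g = DM, OF bij_phi phi_DM])

lemma inv_psi_DM: "inv \<psi> (DM x) = DM (inv \<psi> x)"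
  by (rule inv_commute[where g = DM, OF bij_psi psi_DM])

lemma phi_in_GM: "x \<in> GM i \<Longrightarrow> \<phi> x \<in> GM i"
  and psi_in_GM: "x \<in> GM i \<Longrightarrow> \<psi> x \<in> GM i"
  and inv_phi_in_GM: "x \<in> GM i \<Longrightarrow> inv \<phi> x \<in> GM i"
  and inv_psi_in_GM: "x \<in> GM i \<Longrightarrow> inv \<psi> x \<in> GM i"
  and DM_in_GM: "x \<in> GM i \<Longrightarrow> DM x \<in> GM i"
  and T_in_GR: "x \<in> GM i \<Longrightarrow> T x \<in> GR i"
  using even_phi even_psi even_DM even_T
    even_map_inv[OF GrM.graded_axioms bij_phi lin_phi even_phi]
    even_map_inv[OF GrM.graded_axioms bij_psi lin_psi even_psi]
  by (simp_all add: even_map_def)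

lemma funpow_DM_in_GM: "x \<in> GM i \<Longrightarrow> (DM ^^ k) x \<in> GM i"
  by (induction k) (simp_all add: DM_in_GM)

lemma T_zero [simp]: "T 0 = 0"
  using lin_T lin_zero by blast

lemma rho_zero_left [simp]: "\<rho> 0 v = (\<lambda>_. 0)"
  using lin_rho_left lin_zero by (simp add: fun_eq_iff) blast

lemma rho_zero_right [simp]: "\<rho> a 0 = (\<lambda>_. 0)"
  using lin_rho_right lin_zero by (simp add: fun_eq_iff) blast

lemma rho_add_left: "\<rho> (a + b) v = (\<lambda>n. \<rho> a v n + \<rho> b v n)"
  using lin_add[OF lin_rho_left] by (simp add: fun_eq_iff)

lemma rho_scale_left: "\<rho> (sR c a) v = (\<lambda>n. sM c (\<rho> a v n))"
  using lin_scale[OF lin_rho_left] by (simp add: fun_eq_iff)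

lemma rho_add_right: "\<rho> a (x + y) = (\<lambda>n. \<rho> a x n + \<rho> a y n)"
  using lin_add[OF lin_rho_right] by (simp add: fun_eq_iff)

lemma rho_scale_right: "\<rho> a (sM c x) = (\<lambda>n. sM c (\<rho> a x n))"
  using lin_scale[OF lin_rho_right] by (simp add: fun_eq_iff)

lemma rho_diff_right: "\<rho> a (x - y) = (\<lambda>n. \<rho> a x n - \<rho> a y n)"
  using lin_diff[OF lin_rho_right] by (simp add: fun_eq_iff)

lemma rho_sgnx_right: "\<rho> a (sgnx i j x) = (\<lambda>n. sgnx i j (\<rho> a x n))"
  using lin_sgnx[OF lin_rho_right] by (simp add: fun_eq_iff)

lemma rho_sum_right: "\<rho> a (sum f A) n = (\<Sum>x\<in>A. \<rho> a (f x) n)"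
  using lin_sum[OF lin_rho_right] by simp

abbreviation subst_negM :: "(nat \<Rightarrow> 'm) \<Rightarrow> nat \<Rightarrow> 'm" where
  "subst_negM \<equiv> subst_neg sM DM"

abbreviation brT_h :: "bool \<Rightarrow> bool \<Rightarrow> 'm \<Rightarrow> 'm \<Rightarrow> nat \<Rightarrow> 'm" where
  "brT_h \<equiv> prodT_h sM DM \<rho> \<phi> \<psi> T"

abbreviation brT :: "'m \<Rightarrow> 'm \<Rightarrow> nat \<Rightarrow> 'm" where
  "brT \<equiv> prodT sM GM DM \<rho> \<phi> \<psi> T"

lemma brT_h_eq:
  "brT_h i j u v = (\<lambda>n. \<rho> (T u) v n - sgnx i j (subst_negM (\<rho> (T (inv \<phi> (\<psi> v))) (\<phi> (inv \<psi> u))) n))"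
  by (simp add: fun_eq_iff prodT_h_def)

lemma fin_supp_brT_h: "fin_supp (brT_h i j u v)"
  unfolding brT_h_eq by (intro fin_supp_diff fin_supp_sgnx M.fin_supp_subst_neg fin_supp_rho)

lemma brT_h_zero_left [simp]: "brT_h i j 0 v = (\<lambda>_. 0)"
  and brT_h_zero_right [simp]: "brT_h i j u 0 = (\<lambda>_. 0)"
  by (simp_all add: brT_h_eq lin_zero[OF lin_phi] lin_zero[OF lin_psi] lin_zero[OF lin_inv_phi]
      lin_zero[OF lin_inv_psi] subst_neg_def sgnx_def)

lemma brT_eq_brT_h: "u \<in> GM i \<Longrightarrow> v \<in> GM j \<Longrightarrow> brT u v = brT_h i j u v"
  unfolding prodT_def UNIV_bool
  by (cases i; cases j) (simp_all add: fun_eq_iff GrM.gproj_id GrM.gproj_other)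

lemma brT_eq_sum: "brT u v n = (\<Sum>i\<in>UNIV. \<Sum>j\<in>UNIV. brT_h i j (gproj GM i u) (gproj GM j v) n)"
  by (simp add: prodT_def)

lemma fin_supp_brT: "fin_supp (brT u v)"
  unfolding prodT_def by (intro fin_supp_sum) (simp_all add: fin_supp_brT_h)

lemma brT_in_GM:
  assumes u: "u \<in> GM i" and v: "v \<in> GM j"
  shows "brT u v n \<in> GM (i \<noteq> j)"
proof -
  have "\<rho> (T (inv \<phi> (\<psi> v))) (\<phi> (inv \<psi> u)) n' \<in> GM (i \<noteq> j)" for n'
    using rho_in_GM[OF T_in_GR[OF inv_phi_in_GM[OF psi_in_GM[OF v]]] phi_in_GM[OF inv_psi_in_GM[OF u]]]
    by (cases i; cases j) auto
  then have "subst_negM (\<rho> (T (inv \<phi> (\<psi> v))) (\<phi> (inv \<psi> u))) n \<in> GM (i \<noteq> j)"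
    unfolding subst_neg_def by (intro GrM.sum_in_G GrM.scale_in_G funpow_DM_in_GM)
  then show ?thesis
    unfolding brT_eq_brT_h[OF u v] brT_h_eq
    by (intro GrM.diff_in_G GrM.sgnx_in_G rho_in_GM T_in_GR u v)
qed

lemma brT_zero_left [simp]: "brT 0 v = (\<lambda>_. 0)"
  and brT_zero_right [simp]: "brT u 0 = (\<lambda>_. 0)"
  by (simp_all add: fun_eq_iff prodT_def lin_zero[OF GrM.lin_gproj])

lemma brT_h_add_left: "brT_h i j (u + u') v n = brT_h i j u v n + brT_h i j u' v n"
  and brT_h_add_right: "brT_h i j u (v + v') n = brT_h i j u v n + brT_h i j u v' n"
  by (simp_all add: prodT_h_def lin_add[OF lin_T] lin_add[OF lin_phi] lin_add[OF lin_psi]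
      lin_add[OF lin_inv_phi] lin_add[OF lin_inv_psi] rho_add_left rho_add_right
      M.subst_neg_add fin_supp_rho sgnx_add)

lemma brT_h_scale_left: "brT_h i j (sM c u) v n = sM c (brT_h i j u v n)"
  and brT_h_scale_right: "brT_h i j u (sM c v) n = sM c (brT_h i j u v n)"
  by (simp_all add: prodT_h_def lin_scale[OF lin_T] lin_scale[OF lin_phi] lin_scale[OF lin_psi]
      lin_scale[OF lin_inv_phi] lin_scale[OF lin_inv_psi] rho_scale_left rho_scale_right
      M.subst_neg_scale fin_supp_rho M.sgnx_scale M.scale_right_diff_distrib)

lemma lin_brT_left: "lin sM sM (\<lambda>u. brT u v n)"
  by (simp add: lin_def brT_eq_sum GrM.gproj_add GrM.gproj_scale brT_h_add_left brT_h_scale_left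
      sum.distrib M.scale_sum_right)

lemma lin_brT_right: "lin sM sM (\<lambda>v. brT u v n)"
  by (simp add: lin_def brT_eq_sum GrM.gproj_add GrM.gproj_scale brT_h_add_right brT_h_scale_right
      sum.distrib M.scale_sum_right)

lemma phi_brT_h: "\<phi> (brT_h i j u v n) = brT_h i j (\<phi> u) (\<phi> v) n"
  by (simp add: prodT_h_def lin_diff[OF lin_phi] lin_sgnx[OF lin_phi] phi_rho T_phi[symmetric]
      M.subst_neg_commute[OF lin_phi phi_DM] fin_supp_rho)

lemma psi_brT_h: "\<psi> (brT_h i j u v n) = brT_h i j (\<psi> u) (\<psi> v) n"
  by (simp add: prodT_h_def lin_diff[OF lin_psi] lin_sgnx[OF lin_psi] psi_rho T_psi[symmetric]
      M.subst_neg_commute[OF lin_psi psi_DM] fin_supp_rho)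

lemma phi_gproj: "\<phi> (gproj GM i x) = gproj GM i (\<phi> x)"
  and psi_gproj: "\<psi> (gproj GM i x) = gproj GM i (\<psi> x)"
  and DM_gproj: "DM (gproj GM i x) = gproj GM i (DM x)"
  using gproj_even_map[OF GrM.graded_axioms GrM.graded_axioms] lin_phi even_phi lin_psi even_psi
    lin_DM even_DM
  by blast+

lemma phi_brT: "\<phi> (brT u v n) = brT (\<phi> u) (\<phi> v) n"
  by (simp add: brT_eq_sum lin_sum[OF lin_phi] phi_brT_h phi_gproj)

lemma psi_brT: "\<psi> (brT u v n) = brT (\<psi> u) (\<psi> v) n"
  by (simp add: brT_eq_sum lin_sum[OF lin_psi] psi_brT_h psi_gproj)

lemma inv_phi_brT: "inv \<phi> (brT u v n) = brT (inv \<phi> u) (inv \<phi> v) n"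
  by (metis inv_phi_phi phi_inv_phi phi_brT)

lemma inv_psi_brT: "inv \<psi> (brT u v n) = brT (inv \<psi> u) (inv \<psi> v) n"
  by (metis inv_psi_psi psi_inv_psi psi_brT)

lemma brT_h_DM_left: "brT_h i j (DM u) v n = - lam_mul (brT_h i j u v) n"
proof -
  have "\<phi> (inv \<psi> (DM u)) = DM (\<phi> (inv \<psi> u))"
    by (simp add: inv_psi_DM phi_DM)
  then show ?thesis
    by (simp add: brT_h_eq T_DM rho_DR rho_DM M.subst_neg_D_plus_lam_mul fin_supp_rho lam_mul_diff
        lam_mul_sgnx) (simp add: sgnx_def lam_mul_def)
qed

lemma brT_h_DM_right: "brT_h i j u (DM v) n = DM (brT_h i j u v n) + lam_mul (brT_h i j u v) n"
proof -
  have "T (inv \<phi> (\<psi> (DM v))) = DR (T (inv \<phi> (\<psi> v)))"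
    by (simp add: psi_DM inv_phi_DM T_DM)
  then show ?thesis
    by (simp add: brT_h_eq rho_DR rho_DM M.subst_neg_minus_lam_mul fin_supp_rho lam_mul_diff
        lam_mul_sgnx lin_diff[OF lin_DM])
      (simp add: sgnx_def lam_mul_def lin_minus[OF lin_DM] algebra_simps)
qed

lemma brT_DM_left: "brT (DM u) v = (\<lambda>n. - lam_mul (brT u v) n)"
  by (simp add: fun_eq_iff brT_eq_sum DM_gproj[symmetric] brT_h_DM_left)
    (simp add: lam_mul_def brT_eq_sum sum_negf)

lemma brT_DM_right: "brT u (DM v) = (\<lambda>n. DM (brT u v n) + lam_mul (brT u v) n)"
  by (simp add: fun_eq_iff brT_eq_sum DM_gproj[symmetric] brT_h_DM_right lin_sum[OF lin_DM] sum.distrib)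
    (simp add: lam_mul_def brT_eq_sum)

lemma brT_skew:
  assumes a: "a \<in> GM i" and b: "b \<in> GM j"
  shows "brT (\<psi> a) (\<phi> b) = (\<lambda>n. - sgnx i j (subst_negM (brT (\<psi> b) (\<phi> a)) n))"
proof -
  define f where "f = \<rho> (T (\<psi> a)) (\<phi> b)"
  define g where "g = \<rho> (T (\<psi> b)) (\<phi> a)"
  have fin: "fin_supp f" "fin_supp g"
    by (simp_all add: f_def g_def fin_supp_rho)
  have L: "brT (\<psi> a) (\<phi> b) = (\<lambda>n. f n - sgnx i j (subst_negM g n))"
    by (simp add: brT_eq_brT_h[OF psi_in_GM[OF a] phi_in_GM[OF b]] brT_h_eq f_def g_def)
  have R: "brT (\<psi> b) (\<phi> a) = (\<lambda>n. g n - sgnx j i (subst_negM f n))"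
    by (simp add: brT_eq_brT_h[OF psi_in_GM[OF b] phi_in_GM[OF a]] brT_h_eq f_def g_def)
  have "subst_negM (\<lambda>n. g n - sgnx j i (subst_negM f n)) = (\<lambda>n. subst_negM g n - sgnx j i (f n))"
    using fin by (simp add: fun_eq_iff M.subst_neg_diff fin_supp_sgnx M.fin_supp_subst_neg
        M.subst_neg_sgnx M.subst_neg_subst_neg)
  then show ?thesis
    unfolding L R by (cases i; cases j) (simp_all add: fun_eq_iff sgnx_def)
qed

lemma fin_supp2_rho: "fin_supp g \<Longrightarrow> fin_supp2 (\<lambda>l m. \<rho> a (g m) l)"
  using fin_supp2_swap[OF fin_supp2_compose[of g "\<rho> a"]] by (simp add: fin_supp_rho)

lemma fin_supp2_rho_T: "fin_supp g \<Longrightarrow> fin_supp2 (\<lambda>p q. \<rho> (T (g p)) w q)"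
  by (rule fin_supp2_compose) (simp_all add: fin_supp_rho)

lemma fin_supp2_brT_left: "fin_supp g \<Longrightarrow> fin_supp2 (\<lambda>p q. brT (g p) w q)"
  and fin_supp2_brT_right: "fin_supp g \<Longrightarrow> fin_supp2 (\<lambda>p q. brT w (g p) q)"
  by (rule fin_supp2_compose; simp add: fin_supp_brT)+

text \<open>Iterated sesquilinearity \<open>\<rho>(a)\<^sub>\<lambda> r(\<partial>) w = r(\<lambda>+\<partial>) \<rho>(a)\<^sub>\<lambda> w\<close>, evaluated at \<open>\<lambda> := P(\<partial>)\<close>.\<close>

lemma lam_subst_rho_poly_op:
  "lam_subst sM DM (\<rho> a (poly_op sM DM r w)) P
    = poly_op sM DM (pcompose r (P + poly_X)) (lam_subst sM DM (\<rho> a w) P)"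
proof (induction r)
  case 0
  then show ?case by (simp add: lam_subst_def)
next
  case (pCons c r)
  define u where "u = poly_op sM DM r w"
  have "\<rho> a (poly_op sM DM (pCons c r) w)
      = (\<lambda>n. sM c (\<rho> a w n) + (DM (\<rho> a u n) + lam_mul (\<rho> a u) n))"
    by (simp add: M.poly_op_pCons u_def rho_add_right rho_scale_right rho_DM)
  then have "lam_subst sM DM (\<rho> a (poly_op sM DM (pCons c r) w)) P
      = sM c (lam_subst sM DM (\<rho> a w) P)
        + (DM (lam_subst sM DM (\<rho> a u) P) + poly_op sM DM P (lam_subst sM DM (\<rho> a u) P))"
    by (simp add: M.lam_subst_add fin_supp_add fin_supp_map[of DM] fin_supp_lam_mul fin_supp_rho
        fin_supp_map[of "sM c"] M.lam_subst_scale M.lam_subst_D M.lam_subst_lam_mul)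
  also have "\<dots> = poly_op sM DM (pcompose (pCons c r) (P + poly_X)) (lam_subst sM DM (\<rho> a w) P)"
    by (simp add: pcompose_pCons M.poly_op_add M.poly_op_mult M.poly_op_const pCons.IH[folded u_def]
        M.poly_op_X add_ac)
  finally show ?case .
qed

lemma lam_subst2_rho_subst_neg:
  assumes "fin_supp g"
  shows "lam_subst2 sM DM (\<lambda>l m. \<rho> a (subst_negM g m) l) P Q
    = lam_subst2 sM DM (\<lambda>l m. \<rho> a (g m) l) P (- P - Q - poly_X)"
proof -
  obtain N where N: "vanishes_beyond N g"
    using assms fin_supp_iff_vanishes_beyond by blast
  define E where "E n = lam_subst sM DM (\<rho> a (g n)) P" for n
  have E_N: "vanishes_beyond N E"
    using N by (simp add: vanishes_beyond_def E_def lam_subst_def)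
  have inner: "lam_subst sM DM (\<rho> a (subst_negM g m)) P
      = (\<Sum>n\<le>N. poly_op sM DM (subst_neg_coeff n m (P + poly_X)) (E n))" for m
  proof -
    have "\<rho> a (subst_negM g m) = (\<lambda>l. \<Sum>n\<le>N. \<rho> a (poly_op sM DM (subst_neg_coeff n m poly_X) (g n)) l)"
      by (simp add: fun_eq_iff M.subst_neg_eq_sum[OF N] rho_sum_right)
    then show ?thesis
      by (simp add: M.lam_subst_sum fin_supp_rho lam_subst_rho_poly_op pcompose_subst_neg_coeff E_def)
  qed
  have inner_N: "vanishes_beyond N (\<lambda>m. lam_subst sM DM (\<rho> a (subst_negM g m)) P)"
    unfolding vanishes_beyond_def inner by (auto simp: subst_neg_coeff_def intro!: sum.neutral)
  have "lam_subst2 sM DM (\<lambda>l m. \<rho> a (subst_negM g m) l) P Q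
      = lam_subst2 sM DM (\<lambda>m l. \<rho> a (subst_negM g m) l) Q P"
    using M.lam_subst2_swap[OF fin_supp2_swap[OF fin_supp2_rho[OF M.fin_supp_subst_neg[OF assms]]]]
    by simp
  also have "\<dots> = (\<Sum>m\<le>N. poly_op sM DM (Q ^ m) (\<Sum>n\<le>N. poly_op sM DM (subst_neg_coeff n m (P + poly_X)) (E n)))"
    by (simp only: lam_subst2_def M.lam_subst_vanishes_beyond[OF inner_N]) (simp add: inner)
  also have "\<dots> = (\<Sum>n\<le>N. poly_op sM DM (\<Sum>m\<le>N. Q ^ m * subst_neg_coeff n m (P + poly_X)) (E n))"
    by (simp only: lin_sum[OF M.lin_poly_op] M.poly_op_sum M.poly_op_mult) (rule sum.swap)
  also have "\<dots> = lam_subst sM DM E (- Q - (P + poly_X))"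
    by (simp add: M.lam_subst_vanishes_beyond[OF E_N] sum_subst_neg_coeff)
  also have "- Q - (P + poly_X) = - P - Q - poly_X"
    by (simp add: algebra_simps)
  also have "lam_subst sM DM E (- P - Q - poly_X) = lam_subst2 sM DM (\<lambda>m l. \<rho> a (g m) l) (- P - Q - poly_X) P"
    by (simp add: lam_subst2_def E_def[abs_def])
  also have "\<dots> = lam_subst2 sM DM (\<lambda>l m. \<rho> a (g m) l) P (- P - Q - poly_X)"
    using M.lam_subst2_swap[OF fin_supp2_rho[OF assms]] by simp
  finally show ?thesis .
qed

section \<open>The Jacobi identity\<close>

definition double_action :: "'m \<Rightarrow> 'm \<Rightarrow> 'm \<Rightarrow> complex poly \<Rightarrow> complex poly \<Rightarrow> 'm" where
  "double_action x y w P Q = lam_subst2 sM DM (\<lambda>l m. \<rho> (T x) (\<rho> (T y) w m) l) P Q"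

lemma fin_supp2_double_action: "fin_supp2 (\<lambda>l m. \<rho> (T x) (\<rho> (T y) w m) l)"
  by (rule fin_supp2_rho[OF fin_supp_rho])

lemma lam_subst2_rho_T_brT:
  assumes x: "x \<in> GM i" and y: "y \<in> GM j"
  shows "lam_subst2 sM DM (\<lambda>p q. \<rho> (T (brT x y p)) w q) P R
    = double_action (\<phi> x) y (inv \<psi> w) P (R - P)
      - sgnx i j (double_action (\<psi> y) (\<phi> (inv \<psi> x)) (inv \<psi> w) (R - P) P)"
proof -
  have "brR (T x) (T y) = (\<lambda>n. T (brT x y n))"
    using T_bracket[OF x y] by (simp add: brT_eq_brT_h[OF x y])
  then have jacobi: "subst_sum sM (\<lambda>p q. \<rho> (T (brT x y p)) w q)
      = (\<lambda>l m. \<rho> (T (\<phi> x)) (\<rho> (T y) (inv \<psi> w) m) l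
          - sgnx i j (\<rho> (T (\<psi> y)) (\<rho> (T (\<phi> (inv \<psi> x))) (inv \<psi> w) l) m))"
    using rho_jacobi[OF T_in_GR[OF inv_psi_in_GM[OF x]] T_in_GR[OF y], of "inv \<psi> w"]
    by (simp add: fun_eq_iff T_phi[symmetric] T_psi[symmetric])
  have "lam_subst2 sM DM (\<lambda>p q. \<rho> (T (brT x y p)) w q) P R
      = lam_subst2 sM DM (subst_sum sM (\<lambda>p q. \<rho> (T (brT x y p)) w q)) P (R - P)"
    using M.lam_subst2_subst_sum[OF fin_supp2_rho_T[OF fin_supp_brT], of x y w P "R - P"] by simp
  also have "\<dots> = double_action (\<phi> x) y (inv \<psi> w) P (R - P)
      - sgnx i j (lam_subst2 sM DM (\<lambda>l m. \<rho> (T (\<psi> y)) (\<rho> (T (\<phi> (inv \<psi> x))) (inv \<psi> w) l) m) P (R - P))"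
    unfolding jacobi double_action_def
    by (simp add: M.lam_subst2_diff M.lam_subst2_sgnx fin_supp2_sgnx fin_supp2_double_action
        fin_supp2_swap[OF fin_supp2_double_action])
  also have "lam_subst2 sM DM (\<lambda>l m. \<rho> (T (\<psi> y)) (\<rho> (T (\<phi> (inv \<psi> x))) (inv \<psi> w) l) m) P (R - P)
      = double_action (\<psi> y) (\<phi> (inv \<psi> x)) (inv \<psi> w) (R - P) P"
    unfolding double_action_def by (rule M.lam_subst2_swap[OF fin_supp2_double_action])
  finally show ?thesis .
qed

lemma brT_brT_right:
  assumes x: "x \<in> GM i" and y: "y \<in> GM j" and z: "z \<in> GM k"
  shows "brT x (brT y z m) l = \<rho> (T x) (\<rho> (T y) z m) l
      - sgnx j k (\<rho> (T x) (subst_negM (\<rho> (T (inv \<phi> (\<psi> z))) (\<phi> (inv \<psi> y))) m) l)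
      - sgnx i (j \<noteq> k) (subst_negM (\<rho> (T (brT (inv \<phi> (\<psi> y)) (inv \<phi> (\<psi> z)) m)) (\<phi> (inv \<psi> x))) l)"
proof -
  have "inv \<phi> (\<psi> (brT y z m)) = brT (inv \<phi> (\<psi> y)) (inv \<phi> (\<psi> z)) m"
    by (simp add: psi_brT inv_phi_brT)
  then show ?thesis
    by (simp only: brT_eq_brT_h[OF x brT_in_GM[OF y z]] brT_h_eq)
      (simp only: brT_eq_brT_h[OF y z] brT_h_eq rho_diff_right rho_sgnx_right)
qed

lemma brT_brT_left:
  assumes u: "u \<in> GM i" and v: "v \<in> GM j" and w: "w \<in> GM k"
  shows "brT (brT u v p) w q = \<rho> (T (brT u v p)) w q
      - sgnx (i \<noteq> j) k (subst_negM (\<lambda>n. \<rho> (T (inv \<phi> (\<psi> w))) (\<rho> (T (\<phi> (inv \<psi> u))) (\<phi> (inv \<psi> v)) p) n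
          - sgnx i j (\<rho> (T (inv \<phi> (\<psi> w))) (subst_negM (\<rho> (T v) (\<phi> (\<phi> (inv \<psi> (inv \<psi> u))))) p) n)) q)"
proof -
  have "\<phi> (inv \<psi> (brT u v p)) = brT (\<phi> (inv \<psi> u)) (\<phi> (inv \<psi> v)) p"
    by (simp add: inv_psi_brT phi_brT)
  then show ?thesis
    using brT_eq_brT_h[OF phi_in_GM[OF inv_psi_in_GM[OF u]] phi_in_GM[OF inv_psi_in_GM[OF v]]]
    by (simp add: brT_eq_brT_h[OF brT_in_GM[OF u v] w] brT_h_eq rho_diff_right rho_sgnx_right)
qed

lemma lam_subst2_brT_brT_right:
  assumes x: "x \<in> GM i" and y: "y \<in> GM j" and z: "z \<in> GM k"
  shows "lam_subst2 sM DM (\<lambda>l m. brT x (brT y z m) l) P Q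
    = double_action x y z P Q
      - sgnx j k (double_action x (inv \<phi> (\<psi> z)) (\<phi> (inv \<psi> y)) P (- P - Q - poly_X))
      - sgnx i (j \<noteq> k) (double_action (\<psi> y) (inv \<phi> (\<psi> z)) (\<phi> (inv \<psi> (inv \<psi> x))) Q (- P - Q - poly_X)
         - sgnx j k (double_action (inv \<phi> (\<psi> (\<psi> z))) y (\<phi> (inv \<psi> (inv \<psi> x))) (- P - Q - poly_X) Q))"
proof -
  define g where "g = \<rho> (T (inv \<phi> (\<psi> z))) (\<phi> (inv \<psi> y))"
  define B where "B = (\<lambda>p q. \<rho> (T (brT (inv \<phi> (\<psi> y)) (inv \<phi> (\<psi> z)) p)) (\<phi> (inv \<psi> x)) q)"
  have rho_rho_fin: "fin_supp2 (\<lambda>l m. \<rho> (T x) (\<rho> (T y) z m) l)"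
    and rho_neg_fin: "fin_supp2 (\<lambda>l m. \<rho> (T x) (subst_negM g m) l)"
    and B_fin: "fin_supp2 B"
    unfolding g_def B_def
    by (intro fin_supp2_rho fin_supp2_rho_T fin_supp_rho fin_supp_brT M.fin_supp_subst_neg)+
  have S_fin: "fin_supp2 (\<lambda>l m. subst_negM (B m) l)"
    using M.fin_supp2_subst_neg_right[OF B_fin] by (rule fin_supp2_swap)
  have "lam_subst2 sM DM (\<lambda>l m. subst_negM (B m) l) P Q = lam_subst2 sM DM B Q (- P - poly_X)"
    using M.lam_subst2_subst_neg_left[OF fin_supp2_swap[OF B_fin], of P Q] M.lam_subst2_swap[OF B_fin]
    by simp
  also have "\<dots> = double_action (\<psi> y) (inv \<phi> (\<psi> z)) (\<phi> (inv \<psi> (inv \<psi> x))) Q (- P - Q - poly_X)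
      - sgnx j k (double_action (inv \<phi> (\<psi> (\<psi> z))) y (\<phi> (inv \<psi> (inv \<psi> x))) (- P - Q - poly_X) Q)"
    using lam_subst2_rho_T_brT[OF inv_phi_in_GM[OF psi_in_GM[OF y]] inv_phi_in_GM[OF psi_in_GM[OF z]],
        of "\<phi> (inv \<psi> x)" Q "- P - poly_X"]
    unfolding B_def by (simp add: algebra_simps)
  finally have S: "lam_subst2 sM DM (\<lambda>l m. subst_negM (B m) l) P Q = \<dots>" .
  have H: "lam_subst2 sM DM (\<lambda>l m. \<rho> (T x) (subst_negM g m) l) P Q
      = double_action x (inv \<phi> (\<psi> z)) (\<phi> (inv \<psi> y)) P (- P - Q - poly_X)"
    unfolding g_def double_action_def by (rule lam_subst2_rho_subst_neg[OF fin_supp_rho])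
  have "(\<lambda>l m. brT x (brT y z m) l) = (\<lambda>l m. \<rho> (T x) (\<rho> (T y) z m) l
      - sgnx j k (\<rho> (T x) (subst_negM g m) l) - sgnx i (j \<noteq> k) (subst_negM (B m) l))"
    by (simp add: fun_eq_iff brT_brT_right[OF x y z] g_def B_def)
  then show ?thesis
    by (simp add: M.lam_subst2_diff M.lam_subst2_sgnx fin_supp2_diff fin_supp2_sgnx rho_rho_fin rho_neg_fin S_fin S H)
      (simp add: double_action_def)
qed

lemma lam_subst2_subst_sum_brT_brT_left:
  assumes a: "a \<in> GM i" and b: "b \<in> GM j" and c: "c \<in> GM k"
  shows "lam_subst2 sM DM (subst_sum sM (\<lambda>p q. brT (brT (\<psi> a) b p) (\<psi> c) q)) P Q
    = (double_action (\<phi> (\<psi> a)) b c P Q - sgnx i j (double_action (\<psi> b) (\<phi> a) c Q P))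
      - sgnx (i \<noteq> j) k (double_action (inv \<phi> (\<psi> (\<psi> c))) (\<phi> a) (\<phi> (inv \<psi> b)) (- P - Q - poly_X) P
         - sgnx i j (double_action (inv \<phi> (\<psi> (\<psi> c))) b (\<phi> (\<phi> (inv \<psi> a))) (- P - Q - poly_X) Q))"
proof -
  define x where "x = inv \<phi> (\<psi> (\<psi> c))"
  define V1 where "V1 = (\<lambda>n p. \<rho> (T x) (\<rho> (T (\<phi> a)) (\<phi> (inv \<psi> b)) p) n)"
  define V2 where "V2 = (\<lambda>n p. \<rho> (T x) (subst_negM (\<rho> (T b) (\<phi> (\<phi> (inv \<psi> a)))) p) n)"
  define W where "W = (\<lambda>p q. \<rho> (T (brT (\<psi> a) b p)) (\<psi> c) q)"
  define V where "V = (\<lambda>p n. V1 n p - sgnx i j (V2 n p))"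
  define R where "R = - P - Q - poly_X"
  have V1_fin: "fin_supp2 V1" and V2_fin: "fin_supp2 V2" and W_fin: "fin_supp2 W"
    unfolding V1_def V2_def W_def
    by (intro fin_supp2_rho fin_supp2_rho_T fin_supp_rho fin_supp_brT M.fin_supp_subst_neg)+
  have V_fin: "fin_supp2 V"
    unfolding V_def by (intro fin_supp2_diff fin_supp2_sgnx fin_supp2_swap[OF V1_fin] fin_supp2_swap[OF V2_fin])
  have W_value: "lam_subst2 sM DM W P (P + Q)
      = double_action (\<phi> (\<psi> a)) b c P Q - sgnx i j (double_action (\<psi> b) (\<phi> a) c Q P)"
    using lam_subst2_rho_T_brT[OF psi_in_GM[OF a] b, of "\<psi> c" P "P + Q"] unfolding W_def by simp
  have "lam_subst2 sM DM V P R = lam_subst2 sM DM V1 R P - sgnx i j (lam_subst2 sM DM V2 R P)"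
    unfolding V_def
    by (simp add: M.lam_subst2_diff M.lam_subst2_sgnx fin_supp2_swap[OF V1_fin] fin_supp2_swap[OF V2_fin]
        fin_supp2_sgnx M.lam_subst2_swap[OF V1_fin] M.lam_subst2_swap[OF V2_fin])
  also have "lam_subst2 sM DM V2 R P = double_action x b (\<phi> (\<phi> (inv \<psi> a))) R Q"
    unfolding V2_def double_action_def by (simp add: lam_subst2_rho_subst_neg[OF fin_supp_rho] R_def)
  finally have V_value: "lam_subst2 sM DM V P R
      = double_action x (\<phi> a) (\<phi> (inv \<psi> b)) R P - sgnx i j (double_action x b (\<phi> (\<phi> (inv \<psi> a))) R Q)"
    by (simp add: V1_def double_action_def)
  have "(\<lambda>p q. brT (brT (\<psi> a) b p) (\<psi> c) q) = (\<lambda>p q. W p q - sgnx (i \<noteq> j) k (subst_negM (V p) q))"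
    by (simp add: fun_eq_iff brT_brT_left[OF psi_in_GM[OF a] b psi_in_GM[OF c]] W_def V_def V1_def V2_def x_def)
  then have "lam_subst2 sM DM (subst_sum sM (\<lambda>p q. brT (brT (\<psi> a) b p) (\<psi> c) q)) P Q
      = lam_subst2 sM DM W P (P + Q) - sgnx (i \<noteq> j) k (lam_subst2 sM DM V P (- (P + Q) - poly_X))"
    by (simp add: M.lam_subst2_subst_sum M.lam_subst2_diff M.lam_subst2_sgnx fin_supp2_diff fin_supp2_sgnx
        W_fin V_fin M.fin_supp2_subst_neg_right M.lam_subst2_subst_neg_right)
  also have "- (P + Q) - poly_X = R"
    by (simp add: R_def)
  finally show ?thesis
    unfolding W_value V_value by (simp only: x_def R_def)
qed

lemma brT_jacobi:
  assumes a: "a \<in> GM i" and b: "b \<in> GM j" and c: "c \<in> GM k"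
  shows "brT (\<phi> (\<psi> a)) (brT b c m) l
    = subst_sum sM (\<lambda>p q. brT (brT (\<psi> a) b p) (\<psi> c) q) l m + sgnx i j (brT (\<psi> b) (brT (\<phi> a) c l) m)"
proof -
  have left_fin: "fin_supp2 (\<lambda>l m. brT (\<phi> (\<psi> a)) (brT b c m) l)"
    using fin_supp2_swap[OF fin_supp2_brT_right[OF fin_supp_brT]] by simp
  have sum_fin: "fin_supp2 (subst_sum sM (\<lambda>p q. brT (brT (\<psi> a) b p) (\<psi> c) q))"
    by (rule M.fin_supp2_subst_sum[OF fin_supp2_brT_left[OF fin_supp_brT]])
  have nested_fin: "fin_supp2 (\<lambda>l m. brT (\<psi> b) (brT (\<phi> a) c l) m)"
    by (rule fin_supp2_brT_right[OF fin_supp_brT])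
  have swapped: "lam_subst2 sM DM (\<lambda>l m. brT (\<psi> b) (brT (\<phi> a) c l) m) P Q
      = lam_subst2 sM DM (\<lambda>l m. brT (\<psi> b) (brT (\<phi> a) c m) l) Q P" for P Q
    using M.lam_subst2_swap[OF fin_supp2_swap[OF nested_fin]] by simp
  have "(\<lambda>l m. brT (\<phi> (\<psi> a)) (brT b c m) l)
      = (\<lambda>l m. subst_sum sM (\<lambda>p q. brT (brT (\<psi> a) b p) (\<psi> c) q) l m
               + sgnx i j (brT (\<psi> b) (brT (\<phi> a) c l) m))"
  proof (rule M.lam_subst2_inject[OF left_fin fin_supp2_add[OF sum_fin fin_supp2_sgnx[OF nested_fin]]])
    fix x y
    have neg_sum_swap: "- [:y:] - [:x:] - poly_X = - [:x:] - [:y:] - poly_X"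
      by simp
    show "lam_subst2 sM DM (\<lambda>l m. brT (\<phi> (\<psi> a)) (brT b c m) l) [:x:] [:y:]
      = lam_subst2 sM DM (\<lambda>l m. subst_sum sM (\<lambda>p q. brT (brT (\<psi> a) b p) (\<psi> c) q) l m
               + sgnx i j (brT (\<psi> b) (brT (\<phi> a) c l) m)) [:x:] [:y:]"
      unfolding M.lam_subst2_add[OF sum_fin fin_supp2_sgnx[OF nested_fin]] M.lam_subst2_sgnx[OF nested_fin]
        swapped lam_subst2_brT_brT_right[OF phi_in_GM[OF psi_in_GM[OF a]] b c]
        lam_subst2_brT_brT_right[OF psi_in_GM[OF b] phi_in_GM[OF a] c]
        lam_subst2_subst_sum_brT_brT_left[OF a b c] neg_sum_swap
      by (cases i; cases j; cases k) (simp_all add: sgnx_def algebra_simps)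
  qed
  then show ?thesis
    by (metis (no_types, lifting))
qed

end

theorem mainTheorem8:
  fixes sR :: "complex \<Rightarrow> 'r::ab_group_add \<Rightarrow> 'r" and GR :: "bool \<Rightarrow> 'r set"
    and DR \<alpha> \<beta> :: "'r \<Rightarrow> 'r" and brR :: "'r \<Rightarrow> 'r \<Rightarrow> nat \<Rightarrow> 'r"
    and sM :: "complex \<Rightarrow> 'm::ab_group_add \<Rightarrow> 'm" and GM :: "bool \<Rightarrow> 'm set"
    and DM \<phi> \<psi> :: "'m \<Rightarrow> 'm" and \<rho> :: "'r \<Rightarrow> 'm \<Rightarrow> nat \<Rightarrow> 'm" and T :: "'m \<Rightarrow> 'r"
  assumes "bihom_lcsa sR GR DR brR \<alpha> \<beta>" and "bij \<alpha>" and "bij \<beta>"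
    and "bihom_conf_module sR GR DR brR \<alpha> \<beta> sM GM DM \<rho> \<phi> \<psi>" and "bij \<phi>" and "bij \<psi>"
    and "O_operator sR GR DR brR \<alpha> \<beta> sM GM DM \<rho> \<phi> \<psi> T"
  shows "bihom_lcsa sM GM DM (prodT sM GM DM \<rho> \<phi> \<psi> T) \<phi> \<psi>"
proof -
  interpret O_operator_setting sR GR DR \<alpha> \<beta> brR sM GM DM \<phi> \<psi> \<rho> T
    using assms(4-7) by (rule O_operator_setting.intro)
  show ?thesis
    unfolding bihom_lcsa_def
    by (intro conjI allI ballI graded_space_M lin_DM even_DM lin_phi lin_psi even_phi even_psi
        lin_brT_left lin_brT_right fin_supp_brT brT_in_GM phi_brT psi_brT brT_DM_left brT_DM_right
        brT_skew brT_jacobi)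
      (simp_all add: fun_eq_iff phi_DM psi_DM)
qed

end
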